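(* Let $\alpha\in(0,1]$ and let $\mathcal{N}[\varphi]=\mathbb{E}[\varphi(\xi)]=\sup_{\mu\in\Theta}\mu[\varphi]$ be a sublinear expectation on $C_{b,Lip}(\mathbb{R})$ satisfying condition (H) below. Let $p(a)=\mathbb{E}[a\xi]$, $a\in\mathbb{R}$. Let $v\in C_b^{1,\alpha}(\mathbb{R}\times\mathbb{R}_+)$ be a solution to $$\partial_tv(x,t)-p(\partial_xv(x,t))=f(x,t),\ (x,t)\in\mathbb{R}\times(0,\infty),\qquad v(x,0)=\phi(x),$$ for some $\phi\in C_{b,Lip}(\mathbb{R})$. For $0\le t\le\bar t\le1$, set $\delta=\bar t-t$. Then $$v(0,\bar t)-\mathbb{E}[v(\delta\xi,t)]\ge-4\delta^\alpha\int_t^{\bar t}[\partial_xv(\cdot,s)]_\alpha ds\times\mathbb{E}[|\xi|^{1+\alpha}]-\int_t^{\bar t}\mathbb{E}[-f((\bar t-s)\xi,s)]ds,$$ and $$v(0,\bar t)-\mathbb{E}[v(\delta\xi,t)]\le 4\delta^\alpha\int_t^{\bar t}[\partial_xv(\cdot,s)]_\alpha ds\times\mathbb{E}[|\xi|^{1+\alpha}]+\int_t^{\bar t}\mathbb{E}[f((\bar t-s)\xi,s)]ds.$$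
   Context: A sublinear expectation on $C_{b,Lip}(\mathbb{R})$ (bounded Lipschitz functions) is a monotone, positively homogeneous, constant-preserving, subadditive functional continuous from above along sequences decreasing to $0$; it is represented as $\mathcal{N}[\varphi]=\sup_{\mu\in\Theta}\mu[\varphi]$ for a weakly compact set $\Theta$ of Borel probability measures on $\mathbb{R}$, and is extended to other measurable functions by the same supremum. Notation: $\xi(x)=x$, $\mathbb{E}[\varphi(\xi)]=\mathcal{N}[\varphi]$. Condition (H): $\lim_{N\to\infty}\mathcal{N}[|x|1_{[|x|>N]}]=0$. $C_b^{1,\alpha}(\mathbb{R}\times\mathbb{R}_+)$ denotes bounded functions on $\mathbb{R}\times[0,\infty)$ with bounded continuous first-order partial derivatives that are $\alpha$-Hölder continuous; $[\partial_xv(\cdot,s)]_\alpha=\sup_{x\ne y}|\partial_xv(x,s)-\partial_xv(y,s)|/|x-y|^\alpha$. *)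

theory Defs
  imports "HOL-Analysis.Analysis" "HOL-Probability.Probability"
begin

definition weakly_compact_probs :: "real measure set \<Rightarrow> bool" where
  "weakly_compact_probs \<Theta> \<longleftrightarrow>
     \<Theta> \<noteq> {} \<and>
     (\<forall>\<mu>\<in>\<Theta>. prob_space \<mu> \<and> sets \<mu> = sets borel) \<and>
     (\<forall>M::nat \<Rightarrow> real measure. (\<forall>n. M n \<in> \<Theta>) \<longrightarrow>
        (\<exists>(r::nat \<Rightarrow> nat) \<mu>. strict_mono r \<and> \<mu> \<in> \<Theta> \<and> weak_conv_m (M \<circ> r) \<mu>))"

text \<open>Sublinear expectation E[phi(xi)] = sup over Theta of mu[phi] (Bochner integral; used for
  functions that are integrable under every mu in Theta).\<close>
definition sublin_E :: "real measure set \<Rightarrow> (real \<Rightarrow> real) \<Rightarrow> real" where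
  "sublin_E \<Theta> \<phi> = (SUP \<mu>\<in>\<Theta>. integral\<^sup>L \<mu> \<phi>)"

definition sublin_E_nn :: "real measure set \<Rightarrow> (real \<Rightarrow> real) \<Rightarrow> ennreal" where
  "sublin_E_nn \<Theta> \<phi> = (SUP \<mu>\<in>\<Theta>. \<integral>\<^sup>+ x. ennreal (\<phi> x) \<partial>\<mu>)"

definition cond_H :: "real measure set \<Rightarrow> bool" where
  "cond_H \<Theta> \<longleftrightarrow>
     ((\<lambda>N::real. sublin_E_nn \<Theta> (\<lambda>x. \<bar>x\<bar> * indicator {y. \<bar>y\<bar> > N} x)) \<longlongrightarrow> 0) at_top"

definition holder_seminorm :: "real \<Rightarrow> (real \<Rightarrow> real) \<Rightarrow> real" where
  "holder_seminorm \<alpha> g = Sup {\<bar>g x - g y\<bar> / \<bar>x - y\<bar> powr \<alpha> | x y. x \<noteq> y}"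

definition C_b_Lip :: "(real \<Rightarrow> real) \<Rightarrow> bool" where
  "C_b_Lip \<phi> \<longleftrightarrow> bounded (range \<phi>) \<and> (\<exists>L. \<forall>x y. \<bar>\<phi> x - \<phi> y\<bar> \<le> L * \<bar>x - y\<bar>)"

definition C_b_1_alpha ::
  "real \<Rightarrow> (real \<Rightarrow> real \<Rightarrow> real) \<Rightarrow> (real \<Rightarrow> real \<Rightarrow> real) \<Rightarrow> (real \<Rightarrow> real \<Rightarrow> real) \<Rightarrow> bool" where
  "C_b_1_alpha \<alpha> v vx vt \<longleftrightarrow>
     (\<exists>B. \<forall>x s. s \<ge> 0 \<longrightarrow> \<bar>v x s\<bar> \<le> B \<and> \<bar>vx x s\<bar> \<le> B \<and> \<bar>vt x s\<bar> \<le> B) \<and>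
     (\<forall>x s. s \<ge> 0 \<longrightarrow> ((\<lambda>y. v y s) has_real_derivative vx x s) (at x)) \<and>
     (\<forall>x s. s \<ge> 0 \<longrightarrow> ((\<lambda>r. v x r) has_real_derivative vt x s) (at s within {0..})) \<and>
     (\<exists>C. \<forall>x y s r. s \<ge> 0 \<longrightarrow> r \<ge> 0 \<longrightarrow>
        \<bar>vx x s - vx y r\<bar> \<le> C * dist (x, s) (y, r) powr \<alpha> \<and>
        \<bar>vt x s - vt y r\<bar> \<le> C * dist (x, s) (y, r) powr \<alpha>)"

end

(*
  Write psi(r) = E[v((tb - r) xi, r)], so that the left-hand side is psi(tb) - psi(t).  Under a
  fixed mu in Theta the integrand has time derivative vt - y vx = f + p(vx) - y vx, taken at
  ((tb - r) y, r).  Expanding vx around the origin with the Hoelder seminorm K(r) of vx(., r)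
  replaces the mu-integral of p(vx) - y vx by p(vx(0, r)) - vx(0, r) mean(mu), up to an error
  2 K(r) (tb - r)^alpha E|xi|^(1+alpha).  As p(a) = sup_mu a mean(mu), this term is nonnegative,
  which bounds the right Dini derivative of -psi by E[-f] plus the error.  For psi itself one takes
  a mu nearly maximising psi(r + h): being Lipschitz in time, it nearly maximises psi(r) as well, so
  by the same expansion its mean nearly attains p(vx(0, r)), at the cost of a second such error.
  Condition (H) makes all remainders uniform in mu.  The one-sided Dini bounds integrate over
  [t, tb] because K is lower semicontinuous and E[f], E[-f] are continuous in time.  If
  E|xi|^(1+alpha) is infinite, the bounds are trivial unless the integral of K vanishes, and then
  K = 0 on (t, tb) and the Hoelder errors disappear.
*)
theory Submission
  imports Defs
begin

lemma mvt_deviation_bound: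
  fixes f f' :: "real \<Rightarrow> real"
  assumes "a \<le> b"
    and deriv: "\<And>z. a \<le> z \<Longrightarrow> z \<le> b \<Longrightarrow> (f has_real_derivative f' z) (at z within {a..b})"
    and dev: "\<And>z. a \<le> z \<Longrightarrow> z \<le> b \<Longrightarrow> \<bar>f' z - c\<bar> \<le> e"
  shows "\<bar>f b - f a - (b - a) * c\<bar> \<le> (b - a) * e"
proof -
  have "\<exists>x\<in>{a..b}. (\<lambda>z. f z - z * c) b - (\<lambda>z. f z - z * c) a = (\<lambda>h. h * (f' x - c)) (b - a)"
  proof (rule mvt_very_simple[OF assms(1)])
    fix x assume "a \<le> x" "x \<le> b"
    have "((\<lambda>z. f z - z * c) has_real_derivative (f' x - c)) (at x within {a..b})"
      using deriv[OF \<open>a \<le> x\<close> \<open>x \<le> b\<close>] by (intro derivative_eq_intros) auto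
    then show "((\<lambda>z. f z - z * c) has_derivative (\<lambda>h. h * (f' x - c))) (at x within {a..b})"
      by (simp add: has_field_derivative_def mult.commute[of _ "f' x - c"])
  qed
  then obtain x where x: "x \<in> {a..b}" "f b - f a - (b - a) * c = (b - a) * (f' x - c)"
    by (auto simp: algebra_simps)
  then have "\<bar>f b - f a - (b - a) * c\<bar> = (b - a) * \<bar>f' x - c\<bar>"
    using assms(1) by (simp add: abs_mult)
  also have "\<dots> \<le> (b - a) * e" using dev[of x] x(1) assms(1) by (intro mult_left_mono) auto
  finally show ?thesis .
qed

lemma holder_imp_continuous_on:
  fixes g :: "real \<Rightarrow> real"
  assumes "0 < a" and holder: "\<And>x y. x \<in> S \<Longrightarrow> y \<in> S \<Longrightarrow> \<bar>g x - g y\<bar> \<le> c * \<bar>x - y\<bar> powr a"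
  shows "continuous_on S g"
  unfolding continuous_on_def
proof (intro ballI)
  fix x assume x: "x \<in> S"
  have "((\<lambda>y. g y - g x) \<longlongrightarrow> 0) (at x within S)"
  proof (rule Lim_null_comparison)
    show "\<forall>\<^sub>F y in at x within S. norm (g y - g x) \<le> c * \<bar>y - x\<bar> powr a"
      using holder x by (auto simp: eventually_at_filter)
    have "((\<lambda>y. \<bar>y - x\<bar> powr a) \<longlongrightarrow> 0) (at x within S)"
      by (rule tendsto_zero_powrI) (auto intro!: tendsto_eq_intros simp: assms)
    then show "((\<lambda>y. c * \<bar>y - x\<bar> powr a) \<longlongrightarrow> 0) (at x within S)"
      using tendsto_mult_right_zero by blast
  qed
  then show "(g \<longlongrightarrow> g x) (at x within S)" by (simp add: LIM_zero_iff)
qed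

lemma powr_le_one_plus:
  fixes x a :: real
  assumes "0 \<le> x" "0 \<le> a" "a \<le> 1"
  shows "x powr a \<le> 1 + x"
proof (cases "x \<le> 1")
  case True
  then show ?thesis using assms by (simp add: powr_le1 add_increasing2)
next
  case False
  then have "x powr a \<le> x powr 1" using assms by (intro powr_mono) auto
  then show ?thesis using False by simp
qed

lemma Youngs_inequality_powr:
  fixes a b \<alpha> :: real
  assumes "0 \<le> a" "0 \<le> b" "0 < \<alpha>"
  shows "a powr \<alpha> * b \<le> \<alpha> / (1 + \<alpha>) * a powr (1 + \<alpha>) + b powr (1 + \<alpha>) / (1 + \<alpha>)"
proof -
  have p: "(1 + \<alpha>) / \<alpha> > 1" and q: "1 + \<alpha> > 1" using assms(3) by (simp_all add: field_simps)
  have pq: "1 / ((1 + \<alpha>) / \<alpha>) + 1 / (1 + \<alpha>) = 1" using assms(3) by (simp add: field_simps)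
  have "a powr \<alpha> * b \<le> (a powr \<alpha>) powr ((1 + \<alpha>) / \<alpha>) / ((1 + \<alpha>) / \<alpha>) + b powr (1 + \<alpha>) / (1 + \<alpha>)"
    by (rule Youngs_inequality[OF p q pq]) (use assms in auto)
  also have "(a powr \<alpha>) powr ((1 + \<alpha>) / \<alpha>) = a powr (1 + \<alpha>)" using assms(3) by (simp add: powr_powr)
  finally show ?thesis by (simp add: field_simps)
qed

lemma integral_le_integral_add_mult:
  fixes f1 f2 w :: "'a \<Rightarrow> real"
  assumes "integrable M f1" "integrable M f2" "integrable M w"
    and le: "\<And>y. f1 y \<le> f2 y + k * w y"
  shows "integral\<^sup>L M f1 \<le> integral\<^sup>L M f2 + k * integral\<^sup>L M w"
proof -
  have "integral\<^sup>L M f1 \<le> integral\<^sup>L M (\<lambda>y. f2 y + k * w y)"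
    by (rule Bochner_Integration.integral_mono) (use assms in auto)
  also have "\<dots> = integral\<^sup>L M f2 + k * integral\<^sup>L M w" using assms by simp
  finally show ?thesis .
qed

lemma abs_integral_diff_le_mult:
  fixes f1 f2 w :: "'a \<Rightarrow> real"
  assumes i: "integrable M f1" "integrable M f2" "integrable M w"
    and le: "\<And>y. \<bar>f1 y - f2 y\<bar> \<le> k * w y"
  shows "\<bar>integral\<^sup>L M f1 - integral\<^sup>L M f2\<bar> \<le> k * integral\<^sup>L M w"
proof -
  have "f1 y \<le> f2 y + k * w y" "f2 y \<le> f1 y + k * w y" for y
    using le[of y] by linarith+
  then show ?thesis
    using integral_le_integral_add_mult[OF i] integral_le_integral_add_mult[OF i(2,1,3)] by fastforce
qed

text \<open>The alternative \<open>k = 0\<close> is how an infinite moment \<open>E|\<xi>|\<^sup>1\<^sup>+\<^sup>\<alpha>\<close> is tolerated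
  where the Hoelder seminorm of the gradient vanishes.\<close>
lemma abs_integral_diff_le_mult_bound:
  fixes f1 f2 w :: "'a \<Rightarrow> real"
  assumes i: "integrable M f1" "integrable M f2"
    and le: "\<And>y. \<bar>f1 y - f2 y\<bar> \<le> k * w y" and k: "0 \<le> k"
    and w: "k = 0 \<or> (integrable M w \<and> integral\<^sup>L M w \<le> c)"
  shows "\<bar>integral\<^sup>L M f1 - integral\<^sup>L M f2\<bar> \<le> k * c"
  using w
proof
  assume "k = 0"
  with le have "f1 = f2" by auto
  with \<open>k = 0\<close> show ?thesis by simp
next
  assume w: "integrable M w \<and> integral\<^sup>L M w \<le> c"
  have "\<bar>integral\<^sup>L M f1 - integral\<^sup>L M f2\<bar> \<le> k * integral\<^sup>L M w"
    using abs_integral_diff_le_mult[OF i] w le by blast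
  also have "\<dots> \<le> k * c" using w k by (intro mult_left_mono) auto
  finally show ?thesis .
qed

section \<open>Integrating one-sided Dini derivative bounds\<close>

lemma right_nonincreasing_imp_le_closed:
  fixes \<Psi> :: "real \<Rightarrow> real"
  assumes "a \<le> b" and cont: "continuous_on {a..b} \<Psi>"
    and right: "\<And>r. a \<le> r \<Longrightarrow> r < b \<Longrightarrow> \<exists>\<eta>>0. \<forall>h. 0 < h \<longrightarrow> h < \<eta> \<longrightarrow> \<Psi> (r + h) \<le> \<Psi> r"
  shows "\<Psi> b \<le> \<Psi> a"
proof -
  define S where "S = {x \<in> {a..b}. \<Psi> x \<le> \<Psi> a}"
  have "closed S" unfolding S_def
    by (intro continuous_on_closed_Collect_le cont continuous_on_const) simp
  moreover have "a \<in> S" and bdd: "bdd_above S" using \<open>a \<le> b\<close> by (auto simp: S_def bdd_above_def)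
  ultimately have "Sup S \<in> S" by (auto intro: closed_contains_Sup)
  moreover have "Sup S = b"
  proof (rule ccontr)
    assume "Sup S \<noteq> b"
    with \<open>Sup S \<in> S\<close> have s: "a \<le> Sup S" "Sup S < b" "\<Psi> (Sup S) \<le> \<Psi> a" by (auto simp: S_def)
    then obtain \<eta> where "\<eta> > 0" and \<eta>: "\<And>h. 0 < h \<Longrightarrow> h < \<eta> \<Longrightarrow> \<Psi> (Sup S + h) \<le> \<Psi> (Sup S)"
      using right[of "Sup S"] by auto
    define h where "h = min \<eta> (b - Sup S) / 2"
    have "0 < min \<eta> (b - Sup S)" "min \<eta> (b - Sup S) \<le> \<eta>" "min \<eta> (b - Sup S) \<le> b - Sup S"
      using \<open>\<eta> > 0\<close> s by auto
    then have "0 < h" "h < \<eta>" "Sup S + h \<le> b" unfolding h_def by (auto simp: field_simps)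
    then have "Sup S + h \<in> S" using s \<eta>[of h] by (auto simp: S_def)
    then have "Sup S + h \<le> Sup S" using bdd by (rule cSup_upper)
    with \<open>0 < h\<close> show False by simp
  qed
  ultimately show ?thesis by (simp add: S_def)
qed

lemma right_nonincreasing_imp_le:
  fixes \<Psi> :: "real \<Rightarrow> real"
  assumes ab: "a \<le> b" and cont: "continuous_on {a..b} \<Psi>"
    and right: "\<And>r. a < r \<Longrightarrow> r < b \<Longrightarrow> \<exists>\<eta>>0. \<forall>h. 0 < h \<longrightarrow> h < \<eta> \<longrightarrow> \<Psi> (r + h) \<le> \<Psi> r"
  shows "\<Psi> b \<le> \<Psi> a"
proof (cases "a = b")
  case False
  with ab have "a < b" by simp
  have "\<Psi> b \<le> \<Psi> a'" if a': "a < a'" "a' \<le> b" for a'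
  proof (rule right_nonincreasing_imp_le_closed[OF a'(2)])
    show "continuous_on {a'..b} \<Psi>" using a' by (intro continuous_on_subset[OF cont]) auto
    fix r assume r: "a' \<le> r" "r < b"
    from a' r have "a < r" by linarith
    then show "\<exists>\<eta>>0. \<forall>h. 0 < h \<longrightarrow> h < \<eta> \<longrightarrow> \<Psi> (r + h) \<le> \<Psi> r" using r(2) by (rule right)
  qed
  then have eventually: "\<forall>\<^sub>F x in at_right a. \<Psi> b \<le> \<Psi> x"
    unfolding eventually_at_right[OF \<open>a < b\<close>] using \<open>a < b\<close> by (auto intro!: exI[of _ b])
  have "(\<Psi> \<longlongrightarrow> \<Psi> a) (at_right a)"
    using cont \<open>a < b\<close> by (metis at_within_Icc_at_right atLeastAtMost_iff continuous_on order_refl ab)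
  from tendsto_lowerbound[OF this eventually] show ?thesis by simp
qed simp

definition lower_semicontinuous_on :: "real set \<Rightarrow> (real \<Rightarrow> real) \<Rightarrow> bool" where
  "lower_semicontinuous_on S f \<longleftrightarrow>
     (\<forall>x\<in>S. \<forall>a. a < f x \<longrightarrow> (\<exists>d>0. \<forall>y\<in>S. \<bar>y - x\<bar> < d \<longrightarrow> a < f y))"

lemma lower_semicontinuous_onD:
  "lower_semicontinuous_on S f \<Longrightarrow> x \<in> S \<Longrightarrow> a < f x \<Longrightarrow> \<exists>d>0. \<forall>y\<in>S. \<bar>y - x\<bar> < d \<longrightarrow> a < f y"
  unfolding lower_semicontinuous_on_def by blast

lemma continuous_on_imp_lower_semicontinuous_on:
  assumes "continuous_on S f"
  shows "lower_semicontinuous_on S f"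
  unfolding lower_semicontinuous_on_def
proof (intro ballI allI impI)
  fix x a assume "x \<in> S" "a < f x"
  then obtain d where "d > 0" "\<forall>y\<in>S. dist y x < d \<longrightarrow> dist (f y) (f x) < f x - a"
    using assms unfolding continuous_on_iff by (meson diff_gt_0_iff_gt)
  then show "\<exists>d>0. \<forall>y\<in>S. \<bar>y - x\<bar> < d \<longrightarrow> a < f y" by (auto simp: dist_real_def abs_less_iff)
qed

lemma lower_semicontinuous_on_subset:
  "lower_semicontinuous_on S f \<Longrightarrow> T \<subseteq> S \<Longrightarrow> lower_semicontinuous_on T f"
  unfolding lower_semicontinuous_on_def by (meson subsetD)

lemma lower_semicontinuous_on_add:
  assumes f: "lower_semicontinuous_on S f" and g: "lower_semicontinuous_on S g"
  shows "lower_semicontinuous_on S (\<lambda>x. f x + g x)"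
  unfolding lower_semicontinuous_on_def
proof (intro ballI allI impI)
  fix x a assume x: "x \<in> S" and a: "a < f x + g x"
  define e where "e = (f x + g x - a) / 2"
  have "f x - e < f x" "g x - e < g x" and a_eq: "a = (f x - e) + (g x - e)"
    using a by (simp_all add: e_def field_simps)
  then obtain d1 d2 where "d1 > 0" and d1: "\<forall>y\<in>S. \<bar>y - x\<bar> < d1 \<longrightarrow> f x - e < f y"
    and "d2 > 0" and d2: "\<forall>y\<in>S. \<bar>y - x\<bar> < d2 \<longrightarrow> g x - e < g y"
    using lower_semicontinuous_onD[OF f x] lower_semicontinuous_onD[OF g x] by blast
  have "a < f y + g y" if "y \<in> S" "\<bar>y - x\<bar> < min d1 d2" for y
  proof -
    have "f x - e < f y" "g x - e < g y" using that d1 d2 by auto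
    then show ?thesis unfolding a_eq by linarith
  qed
  with \<open>d1 > 0\<close> \<open>d2 > 0\<close> show "\<exists>d>0. \<forall>y\<in>S. \<bar>y - x\<bar> < d \<longrightarrow> a < f y + g y"
    by (intro exI[of _ "min d1 d2"]) auto
qed

lemma lower_semicontinuous_on_cmult:
  assumes f: "lower_semicontinuous_on S f" and "0 \<le> c"
  shows "lower_semicontinuous_on S (\<lambda>x. c * f x)"
proof (cases "c = 0")
  case False
  with \<open>0 \<le> c\<close> have c: "0 < c" by simp
  show ?thesis unfolding lower_semicontinuous_on_def
  proof (intro ballI allI impI)
    fix x a assume "x \<in> S" "a < c * f x"
    then have "x \<in> S" "a / c < f x" using c by (auto simp: pos_divide_less_eq mult.commute)
    then obtain d where "d > 0" "\<forall>y\<in>S. \<bar>y - x\<bar> < d \<longrightarrow> a / c < f y"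
      using f unfolding lower_semicontinuous_on_def by blast
    then show "\<exists>d>0. \<forall>y\<in>S. \<bar>y - x\<bar> < d \<longrightarrow> a < c * f y"
      using c by (auto simp: pos_divide_less_eq mult.commute)
  qed
qed (auto simp: lower_semicontinuous_on_def intro: exI[of _ 1])

lemma lower_semicontinuous_on_SUP:
  assumes I: "I \<noteq> {}" and cont: "\<And>i. i \<in> I \<Longrightarrow> continuous_on S (k i)"
    and bdd: "\<And>x. x \<in> S \<Longrightarrow> bdd_above ((\<lambda>i. k i x) ` I)"
  shows "lower_semicontinuous_on S (\<lambda>x. SUP i\<in>I. k i x)"
  unfolding lower_semicontinuous_on_def
proof (intro ballI allI impI)
  fix x a assume x: "x \<in> S" and "a < (SUP i\<in>I. k i x)"
  then obtain i where i: "i \<in> I" "a < k i x" using less_cSUP_iff[OF I bdd] by blast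
  then obtain d where "d > 0" "\<forall>y\<in>S. \<bar>y - x\<bar> < d \<longrightarrow> a < k i y"
    using continuous_on_imp_lower_semicontinuous_on[OF cont] x
    unfolding lower_semicontinuous_on_def by blast
  moreover have "k i y \<le> (SUP i\<in>I. k i y)" if "y \<in> S" for y
    using i(1) bdd[OF that] by (rule cSUP_upper)
  ultimately show "\<exists>d>0. \<forall>y\<in>S. \<bar>y - x\<bar> < d \<longrightarrow> a < (SUP i\<in>I. k i y)"
    by (meson less_le_trans)
qed

lemma lower_semicontinuous_on_borel_measurable:
  assumes S: "S \<in> sets lebesgue" and f: "lower_semicontinuous_on S f"
  shows "f \<in> borel_measurable (lebesgue_on S)"
proof (subst borel_measurable_iff_greater, intro allI)
  fix a
  have "\<forall>x\<in>{x \<in> S. a < f x}. \<exists>d>0. \<forall>y\<in>S. \<bar>y - x\<bar> < d \<longrightarrow> a < f y"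
    using f unfolding lower_semicontinuous_on_def by blast
  then obtain d where d: "\<forall>x\<in>{x \<in> S. a < f x}. d x > 0 \<and> (\<forall>y\<in>S. \<bar>y - x\<bar> < d x \<longrightarrow> a < f y)"
    by metis
  define U where "U = (\<Union>x\<in>{x \<in> S. a < f x}. ball x (d x))"
  have eq: "{x \<in> S. a < f x} = S \<inter> U"
    using d by (force simp: U_def dist_real_def abs_minus_commute)
  have "open U" by (auto simp: U_def)
  then have "S \<inter> U \<in> sets lebesgue" using S by (simp add: borel_open sets.Int)
  then have "{x \<in> S. a < f x} \<in> sets (lebesgue_on S)"
    unfolding eq using S by (simp add: sets_restrict_space_iff)
  then show "{x \<in> space (lebesgue_on S). a < f x} \<in> sets (lebesgue_on S)" by simp
qed

lemma lower_semicontinuous_on_integrable_on: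
  assumes f: "lower_semicontinuous_on {a..b} f" and bound: "\<And>x. x \<in> {a..b} \<Longrightarrow> \<bar>f x\<bar> \<le> c"
  shows "f integrable_on {a..b}"
proof (rule measurable_bounded_by_integrable_imp_integrable_real[where g = "\<lambda>_. c"])
  show "f \<in> borel_measurable (lebesgue_on {a..b})"
    by (rule lower_semicontinuous_on_borel_measurable) (use f in auto)
qed (use bound in auto)

lemma lower_semicontinuous_on_integral_eq_0:
  assumes f: "lower_semicontinuous_on {a..b} f" and int: "f integrable_on {a..b}"
    and nonneg: "\<And>x. x \<in> {a..b} \<Longrightarrow> 0 \<le> f x" and zero: "integral {a..b} f = 0"
    and r: "a < r" "r < b"
  shows "f r = 0"
proof (rule ccontr)
  assume "f r \<noteq> 0"
  moreover have "0 \<le> f r" using nonneg r by simp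
  ultimately have pos: "f r > 0" by simp
  then obtain d where "d > 0" and d: "\<forall>s\<in>{a..b}. \<bar>s - r\<bar> < d \<longrightarrow> f r / 2 < f s"
    using lower_semicontinuous_onD[OF f, of r "f r / 2"] r by auto
  define d' where "d' = min d (min (r - a) (b - r)) / 2"
  have "0 < min d (min (r - a) (b - r))" "min d (min (r - a) (b - r)) \<le> d"
    "min d (min (r - a) (b - r)) \<le> r - a" "min d (min (r - a) (b - r)) \<le> b - r"
    using \<open>d > 0\<close> r by auto
  then have d': "0 < d'" "d' < d" "a \<le> r - d'" "r + d' \<le> b" unfolding d'_def by (auto simp: field_simps)
  then have sub: "{r - d'..r + d'} \<subseteq> {a..b}" by auto
  have "2 * d' * (f r / 2) = integral {r - d'..r + d'} (\<lambda>s. f r / 2)" using d' by simp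
  also have "\<dots> \<le> integral {r - d'..r + d'} f"
    using d d' sub by (intro integral_le integrable_on_subinterval[OF int sub]) (auto intro!: less_imp_le)
  also have "\<dots> \<le> integral {a..b} f"
    using sub nonneg by (intro integral_subset_le integrable_on_subinterval[OF int sub] int) auto
  finally have "d' * f r \<le> 0" using zero by simp
  with pos d'(1) show False by (simp add: mult_le_0_iff)
qed

lemma increment_le_integral_of_right_dini_bound:
  fixes \<Phi> H :: "real \<Rightarrow> real"
  assumes ab: "a \<le> b" and cont: "continuous_on {a..b} \<Phi>" and int: "H integrable_on {a..b}"
    and lsc: "lower_semicontinuous_on {a..b} H"
    and dini: "\<And>r e. a < r \<Longrightarrow> r < b \<Longrightarrow> e > 0 \<Longrightarrow>
                 \<exists>\<eta>>0. \<forall>h. 0 < h \<longrightarrow> h < \<eta> \<longrightarrow> \<Phi> (r + h) - \<Phi> r \<le> h * (H r + e)"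
  shows "\<Phi> b - \<Phi> a \<le> integral {a..b} H"
proof (rule field_le_epsilon)
  fix e0 :: real assume e0: "e0 > 0"
  define e where "e = e0 / (b - a + 1)"
  have e: "e > 0" using e0 ab by (simp add: e_def)
  define \<Psi> where "\<Psi> x = \<Phi> x - integral {a..x} H - e * x" for x
  have "continuous_on {a..b} \<Psi>"
    unfolding \<Psi>_def by (intro continuous_intros cont indefinite_integral_continuous_1 int)
  then have "\<Psi> b \<le> \<Psi> a"
  proof (rule right_nonincreasing_imp_le[OF ab])
    fix r assume r: "a < r" "r < b"
    obtain \<eta> where "\<eta> > 0" and \<eta>: "\<forall>h. 0 < h \<longrightarrow> h < \<eta> \<longrightarrow> \<Phi> (r + h) - \<Phi> r \<le> h * (H r + e / 2)"
      using dini[OF r, of "e/2"] e by auto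
    obtain d where "d > 0" and d: "\<forall>s\<in>{a..b}. \<bar>s - r\<bar> < d \<longrightarrow> H r - e / 2 < H s"
      using lower_semicontinuous_onD[OF lsc, of r "H r - e / 2"] r e by auto
    show "\<exists>\<eta>>0. \<forall>h. 0 < h \<longrightarrow> h < \<eta> \<longrightarrow> \<Psi> (r + h) \<le> \<Psi> r"
    proof (intro exI[of _ "min \<eta> (min d (b - r))"] conjI allI impI)
      show "min \<eta> (min d (b - r)) > 0" using \<open>\<eta> > 0\<close> \<open>d > 0\<close> r by simp
      fix h assume h: "0 < h" "h < min \<eta> (min d (b - r))"
      have int_rh: "H integrable_on {r..r + h}"
        by (rule integrable_subinterval_real[OF int]) (use r h in auto)
      have split: "integral {a..r} H + integral {r..r + h} H = integral {a..r + h} H"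
        by (rule Henstock_Kurzweil_Integration.integral_combine)
          (use r h in \<open>auto intro: integrable_subinterval_real[OF int]\<close>)
      have "h * (H r - e / 2) = integral {r..r + h} (\<lambda>s. H r - e / 2)" using h by simp
      also have "\<dots> \<le> integral {r..r + h} H"
        using d r h by (intro integral_le int_rh) (auto intro: less_imp_le)
      finally have "h * (H r - e / 2) \<le> integral {r..r + h} H" .
      moreover have "\<Phi> (r + h) - \<Phi> r \<le> h * (H r + e / 2)" using \<eta> h by auto
      ultimately show "\<Psi> (r + h) \<le> \<Psi> r" unfolding \<Psi>_def using split by (simp add: algebra_simps)
    qed
  qed
  then have "\<Phi> b - \<Phi> a \<le> integral {a..b} H + e * (b - a)" by (simp add: \<Psi>_def algebra_simps)
  also have "e * (b - a) \<le> e0"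
    using e0 ab by (simp add: e_def divide_le_eq)
  finally show "\<Phi> b - \<Phi> a \<le> integral {a..b} H + e0" by simp
qed

section \<open>Hoelder seminorms and bounded Hoelder functions of space and time\<close>

lemma bdd_above_holder_quotients:
  fixes g :: "real \<Rightarrow> real" and \<alpha> L :: real
  assumes "\<And>x y. \<bar>g x - g y\<bar> \<le> L * \<bar>x - y\<bar> powr \<alpha>"
  shows "bdd_above {\<bar>g x - g y\<bar> / \<bar>x - y\<bar> powr \<alpha> | x y. x \<noteq> y}"
proof (rule bdd_aboveI[of _ L], clarify)
  fix x y :: real assume "x \<noteq> y"
  then have "0 < \<bar>x - y\<bar> powr \<alpha>" by simp
  with assms[of x y] show "\<bar>g x - g y\<bar> / \<bar>x - y\<bar> powr \<alpha> \<le> L" by (simp add: divide_le_eq)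
qed

lemma abs_diff_le_holder_seminorm:
  fixes g :: "real \<Rightarrow> real" and \<alpha> L :: real
  assumes "\<And>x y. \<bar>g x - g y\<bar> \<le> L * \<bar>x - y\<bar> powr \<alpha>"
  shows "\<bar>g x - g y\<bar> \<le> holder_seminorm \<alpha> g * \<bar>x - y\<bar> powr \<alpha>"
proof (cases "x = y")
  case False
  then have "\<bar>g x - g y\<bar> / \<bar>x - y\<bar> powr \<alpha> \<le> holder_seminorm \<alpha> g"
    unfolding holder_seminorm_def by (intro cSup_upper bdd_above_holder_quotients[OF assms]) auto
  with False show ?thesis by (simp add: divide_le_eq)
qed simp

lemma holder_seminorm_le:
  fixes g :: "real \<Rightarrow> real" and \<alpha> L :: real
  assumes "\<And>x y. \<bar>g x - g y\<bar> \<le> L * \<bar>x - y\<bar> powr \<alpha>"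
  shows "holder_seminorm \<alpha> g \<le> L"
  unfolding holder_seminorm_def
proof (rule cSup_least)
  show "{\<bar>g x - g y\<bar> / \<bar>x - y\<bar> powr \<alpha> | x y. x \<noteq> y} \<noteq> {}" by auto
  fix q assume "q \<in> {\<bar>g x - g y\<bar> / \<bar>x - y\<bar> powr \<alpha> | x y. x \<noteq> y}"
  then obtain x y where q: "q = \<bar>g x - g y\<bar> / \<bar>x - y\<bar> powr \<alpha>" "x \<noteq> y" by blast
  then have "0 < \<bar>x - y\<bar> powr \<alpha>" by simp
  with assms[of x y] q show "q \<le> L" by (simp add: divide_le_eq)
qed

lemma holder_seminorm_nonneg:
  fixes g :: "real \<Rightarrow> real" and \<alpha> L :: real
  assumes "\<And>x y. \<bar>g x - g y\<bar> \<le> L * \<bar>x - y\<bar> powr \<alpha>"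
  shows "0 \<le> holder_seminorm \<alpha> g"
  using abs_diff_le_holder_seminorm[OF assms, of 1 0] by simp

lemma holder_quotients_eq_image:
  "{\<bar>g x - g y\<bar> / \<bar>x - y\<bar> powr \<alpha> | x y. x \<noteq> y}
     = (\<lambda>q. \<bar>g (fst q) - g (snd q)\<bar> / \<bar>fst q - snd q\<bar> powr \<alpha>) ` {q. fst q \<noteq> snd q}"
proof (intro equalityI subsetI)
  fix z assume "z \<in> {\<bar>g x - g y\<bar> / \<bar>x - y\<bar> powr \<alpha> | x y. x \<noteq> y}"
  then obtain x y where "z = \<bar>g x - g y\<bar> / \<bar>x - y\<bar> powr \<alpha>" "x \<noteq> y" by blast
  then show "z \<in> (\<lambda>q. \<bar>g (fst q) - g (snd q)\<bar> / \<bar>fst q - snd q\<bar> powr \<alpha>) ` {q. fst q \<noteq> snd q}"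
    by (intro image_eqI[of _ _ "(x, y)"]) auto
qed auto

definition bounded_holder :: "real \<Rightarrow> real \<Rightarrow> real \<Rightarrow> (real \<Rightarrow> real \<Rightarrow> real) \<Rightarrow> bool" where
  "bounded_holder \<beta> B L g \<longleftrightarrow>
     (\<forall>x r. 0 \<le> r \<longrightarrow> \<bar>g x r\<bar> \<le> B) \<and>
     (\<forall>x x' r r'. 0 \<le> r \<longrightarrow> 0 \<le> r' \<longrightarrow> \<bar>g x r - g x' r'\<bar> \<le> L * (\<bar>x - x'\<bar> + \<bar>r - r'\<bar>) powr \<beta>)"

lemma bounded_holderD:
  assumes "bounded_holder \<beta> B L g" "0 \<le> r"
  shows "\<bar>g x r\<bar> \<le> B"
    and "0 \<le> r' \<Longrightarrow> \<bar>g x r - g x' r'\<bar> \<le> L * (\<bar>x - x'\<bar> + \<bar>r - r'\<bar>) powr \<beta>"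
  using assms unfolding bounded_holder_def by blast+

lemma bounded_holder_nonneg_const:
  assumes "bounded_holder \<beta> B L g"
  shows "0 \<le> L"
proof -
  have "\<bar>g 1 0 - g 0 0\<bar> \<le> L * (\<bar>1 - 0\<bar> + \<bar>0 - 0\<bar>) powr \<beta>"
    using assms unfolding bounded_holder_def by blast
  then show ?thesis by simp
qed

lemma bounded_holder_uminus: "bounded_holder \<beta> B L g \<Longrightarrow> bounded_holder \<beta> B L (\<lambda>x r. - g x r)"
proof -
  have "\<bar>- g x r - - g x' r'\<bar> = \<bar>g x r - g x' r'\<bar>" for x x' r r' by linarith
  then show "bounded_holder \<beta> B L g \<Longrightarrow> ?thesis" unfolding bounded_holder_def by simp
qed

lemma bounded_holder_continuous_on:
  assumes g: "bounded_holder \<beta> B L g" and "0 < \<beta>" "0 \<le> r"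
  shows "continuous_on UNIV (\<lambda>y. g (c * y) r)"
proof -
  have "\<bar>g x r - g y r\<bar> \<le> L * \<bar>x - y\<bar> powr \<beta>" for x y
    using bounded_holderD(2)[OF g \<open>0 \<le> r\<close> \<open>0 \<le> r\<close>, of x y] by simp
  then have "continuous_on UNIV (\<lambda>x. g x r)"
    by (rule holder_imp_continuous_on[OF \<open>0 < \<beta>\<close>])
  then show ?thesis by (rule continuous_on_compose2[OF _ continuous_on_mult_left[OF continuous_on_id]]) auto
qed

lemma bounded_holder_scaled_measurable:
  assumes "bounded_holder \<beta> B L g" "0 < \<beta>" "0 \<le> r"
  shows "(\<lambda>y. g (c * y) r) \<in> borel_measurable borel"
  using bounded_holder_continuous_on[OF assms] by (rule borel_measurable_continuous_onI)

lemma bounded_holder_path_diff: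
  assumes g: "bounded_holder \<beta> B L g" and \<beta>: "0 \<le> \<beta>" "\<beta> \<le> 1" and r: "0 \<le> r" "0 \<le> r'"
  shows "\<bar>g ((c - r) * y) r - g ((c - r') * y) r'\<bar> \<le> L * \<bar>r - r'\<bar> powr \<beta> * (1 + \<bar>y\<bar>)"
proof -
  have L: "0 \<le> L" using bounded_holder_nonneg_const[OF g] .
  have "\<bar>g ((c - r) * y) r - g ((c - r') * y) r'\<bar>
      \<le> L * (\<bar>(c - r) * y - (c - r') * y\<bar> + \<bar>r - r'\<bar>) powr \<beta>"
    using g r unfolding bounded_holder_def by blast
  also have "\<bar>(c - r) * y - (c - r') * y\<bar> + \<bar>r - r'\<bar> = \<bar>r - r'\<bar> * (1 + \<bar>y\<bar>)"
    by (simp add: abs_mult[symmetric] algebra_simps abs_minus_commute)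
  also have "(\<bar>r - r'\<bar> * (1 + \<bar>y\<bar>)) powr \<beta> \<le> \<bar>r - r'\<bar> powr \<beta> * (1 + \<bar>y\<bar>)"
  proof -
    have "(1 + \<bar>y\<bar>) powr \<beta> \<le> (1 + \<bar>y\<bar>) powr 1" using \<beta> by (intro powr_mono) auto
    then show ?thesis by (simp add: powr_mult mult_left_mono)
  qed
  finally show ?thesis using L by (simp add: mult_left_mono mult.assoc)
qed

section \<open>Sublinear expectations with uniformly integrable tails\<close>

locale sublinear_expectation =
  fixes \<Theta> :: "real measure set"
  assumes Theta_nonempty: "\<Theta> \<noteq> {}"
    and prob_space_Theta: "\<mu> \<in> \<Theta> \<Longrightarrow> prob_space \<mu>"
    and sets_Theta: "\<mu> \<in> \<Theta> \<Longrightarrow> sets \<mu> = sets borel"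
    and uniform_tails: "cond_H \<Theta>"
begin

lemma measurable_Theta: "\<mu> \<in> \<Theta> \<Longrightarrow> g \<in> borel_measurable borel \<Longrightarrow> g \<in> borel_measurable \<mu>"
  using measurable_cong_sets[OF sets_Theta refl] by blast

lemma measure_space_Theta: "\<mu> \<in> \<Theta> \<Longrightarrow> measure \<mu> (space \<mu>) = 1"
  using prob_space.prob_space[OF prob_space_Theta] .

lemma integrable_const_Theta:
  assumes "\<mu> \<in> \<Theta>"
  shows "integrable \<mu> (\<lambda>_. c::real)"
proof -
  interpret prob_space \<mu> using prob_space_Theta[OF assms] .
  show ?thesis by simp
qed

lemma abs_integral_le_Theta:
  fixes g :: "real \<Rightarrow> real"
  assumes "\<mu> \<in> \<Theta>" "integrable \<mu> g" "\<And>y. \<bar>g y\<bar> \<le> c"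
  shows "\<bar>integral\<^sup>L \<mu> g\<bar> \<le> c"
  using abs_integral_diff_le_mult[OF assms(2) integrable_const_Theta[OF assms(1)]
      integrable_const_Theta[OF assms(1)], of 0 1 c] assms by (simp add: measure_space_Theta)

lemma integral_le_sublin_E:
  "\<mu> \<in> \<Theta> \<Longrightarrow> (\<And>\<nu>. \<nu> \<in> \<Theta> \<Longrightarrow> integral\<^sup>L \<nu> g \<le> c) \<Longrightarrow> integral\<^sup>L \<mu> g \<le> sublin_E \<Theta> g"
  unfolding sublin_E_def by (rule cSUP_upper) (auto intro!: bdd_aboveI2)

lemma sublin_E_le: "(\<And>\<nu>. \<nu> \<in> \<Theta> \<Longrightarrow> integral\<^sup>L \<nu> g \<le> c) \<Longrightarrow> sublin_E \<Theta> g \<le> c"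
  unfolding sublin_E_def using Theta_nonempty by (intro cSUP_least) auto

lemma sublin_E_approx:
  assumes "\<And>\<nu>. \<nu> \<in> \<Theta> \<Longrightarrow> integral\<^sup>L \<nu> g \<le> c" "e > 0"
  shows "\<exists>\<mu>\<in>\<Theta>. sublin_E \<Theta> g - e < integral\<^sup>L \<mu> g"
proof -
  have bdd: "bdd_above ((\<lambda>\<nu>. integral\<^sup>L \<nu> g) ` \<Theta>)" by (rule bdd_aboveI2) (rule assms(1))
  have "sublin_E \<Theta> g - e < sublin_E \<Theta> g" using assms by simp
  then show ?thesis unfolding sublin_E_def using less_cSUP_iff[OF Theta_nonempty bdd] by blast
qed

lemma sublin_E_le_add:
  assumes "\<And>\<nu>. \<nu> \<in> \<Theta> \<Longrightarrow> integral\<^sup>L \<nu> g2 \<le> c"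
    and "\<And>\<nu>. \<nu> \<in> \<Theta> \<Longrightarrow> integral\<^sup>L \<nu> g1 \<le> integral\<^sup>L \<nu> g2 + d"
  shows "sublin_E \<Theta> g1 \<le> sublin_E \<Theta> g2 + d"
  using integral_le_sublin_E[OF _ assms(1)] assms(2) by (force intro: sublin_E_le)

lemma sublin_E_const: "sublin_E \<Theta> (\<lambda>_. c) = c"
proof -
  have "sublin_E \<Theta> (\<lambda>_. c) = (SUP \<mu>\<in>\<Theta>. c)"
    unfolding sublin_E_def by (rule SUP_cong) (simp_all add: measure_space_Theta)
  with Theta_nonempty show ?thesis by simp
qed

lemma uniform_tail_small:
  assumes "e > 0"
  shows "\<exists>N\<ge>1. \<forall>\<mu>\<in>\<Theta>. (\<integral>\<^sup>+ y. ennreal (\<bar>y\<bar> * indicator {y. \<bar>y\<bar> > N} y) \<partial>\<mu>) < ennreal e"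
proof -
  have "\<forall>\<^sub>F N in at_top. sublin_E_nn \<Theta> (\<lambda>x. \<bar>x\<bar> * indicator {y. \<bar>y\<bar> > N} x) < ennreal e"
    using order_tendstoD(2)[OF uniform_tails[unfolded cond_H_def]] assms by simp
  then obtain N0 where N0: "\<And>N. N \<ge> N0 \<Longrightarrow> sublin_E_nn \<Theta> (\<lambda>x. \<bar>x\<bar> * indicator {y. \<bar>y\<bar> > N} x) < ennreal e"
    by (auto simp: eventually_at_top_linorder)
  show ?thesis
  proof (intro exI[of _ "max N0 1"] conjI ballI)
    fix \<mu> assume "\<mu> \<in> \<Theta>"
    then have "(\<integral>\<^sup>+ y. ennreal (\<bar>y\<bar> * indicator {y. \<bar>y\<bar> > max N0 1} y) \<partial>\<mu>)
        \<le> sublin_E_nn \<Theta> (\<lambda>x. \<bar>x\<bar> * indicator {y. \<bar>y\<bar> > max N0 1} x)"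
      unfolding sublin_E_nn_def by (rule SUP_upper)
    also have "\<dots> < ennreal e" by (rule N0) simp
    finally show "(\<integral>\<^sup>+ y. ennreal (\<bar>y\<bar> * indicator {y. \<bar>y\<bar> > max N0 1} y) \<partial>\<mu>) < ennreal e" .
  qed simp
qed

lemma uniform_first_moment: "\<exists>N\<ge>0. \<forall>\<mu>\<in>\<Theta>. (\<integral>\<^sup>+ y. ennreal \<bar>y\<bar> \<partial>\<mu>) \<le> ennreal N"
proof -
  obtain N where N: "N \<ge> 1" "\<And>\<mu>. \<mu> \<in> \<Theta> \<Longrightarrow> (\<integral>\<^sup>+ y. ennreal (\<bar>y\<bar> * indicator {y. \<bar>y\<bar> > N} y) \<partial>\<mu>) < 1"
    using uniform_tail_small[of 1] by auto
  show ?thesis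
  proof (intro exI[of _ "N + 1"] conjI ballI)
    fix \<mu> assume \<mu>: "\<mu> \<in> \<Theta>"
    interpret prob_space \<mu> using prob_space_Theta[OF \<mu>] .
    have "(\<integral>\<^sup>+ y. ennreal \<bar>y\<bar> \<partial>\<mu>) \<le> (\<integral>\<^sup>+ y. (ennreal N + ennreal (\<bar>y\<bar> * indicator {y. \<bar>y\<bar> > N} y)) \<partial>\<mu>)"
    proof (rule nn_integral_mono)
      fix y
      have "\<bar>y\<bar> \<le> N + \<bar>y\<bar> * indicator {y. \<bar>y\<bar> > N} y" using N by (auto simp: indicator_def)
      then show "ennreal \<bar>y\<bar> \<le> ennreal N + ennreal (\<bar>y\<bar> * indicator {y. \<bar>y\<bar> > N} y)"
        using N by (simp add: ennreal_plus[symmetric] ennreal_leI del: ennreal_plus)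
    qed
    also have "\<dots> = ennreal N + (\<integral>\<^sup>+ y. ennreal (\<bar>y\<bar> * indicator {y. \<bar>y\<bar> > N} y) \<partial>\<mu>)"
      by (subst nn_integral_add) (auto intro!: measurable_Theta[OF \<mu>] simp: emeasure_space_1)
    also have "\<dots> \<le> ennreal N + 1" using N(2)[OF \<mu>] by (intro add_left_mono) simp
    also have "\<dots> = ennreal (N + 1)" using N by (simp add: ennreal_plus)
    finally show "(\<integral>\<^sup>+ y. ennreal \<bar>y\<bar> \<partial>\<mu>) \<le> ennreal (N + 1)" .
  qed (use N in auto)
qed

lemma integrable_id_Theta: "\<mu> \<in> \<Theta> \<Longrightarrow> integrable \<mu> (\<lambda>y. y)"
proof (rule integrableI_bounded)
  assume \<mu>: "\<mu> \<in> \<Theta>"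
  show "(\<lambda>y. y) \<in> borel_measurable \<mu>" by (rule measurable_Theta[OF \<mu>]) simp
  obtain N where "\<forall>\<mu>\<in>\<Theta>. (\<integral>\<^sup>+ y. ennreal \<bar>y\<bar> \<partial>\<mu>) \<le> ennreal N" using uniform_first_moment by blast
  with \<mu> show "(\<integral>\<^sup>+ y. ennreal (norm y) \<partial>\<mu>) < \<infinity>" by (auto intro: le_less_trans)
qed

lemma integrable_linear_growth:
  assumes \<mu>: "\<mu> \<in> \<Theta>" and g: "g \<in> borel_measurable borel" and growth: "\<And>y. \<bar>g y\<bar> \<le> a + b * \<bar>y\<bar>"
  shows "integrable \<mu> g"
proof (rule Bochner_Integration.integrable_bound[of \<mu> "\<lambda>y. a + b * \<bar>y\<bar>"])
  show "integrable \<mu> (\<lambda>y. a + b * \<bar>y\<bar>)"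
    using integrable_id_Theta[OF \<mu>] integrable_const_Theta[OF \<mu>] by auto
  show "g \<in> borel_measurable \<mu>" using measurable_Theta[OF \<mu> g] .
  show "AE y in \<mu>. norm (g y) \<le> norm (a + b * \<bar>y\<bar>)"
    using growth by (intro AE_I2) (simp add: order_trans[OF _ abs_ge_self])
qed

lemma integrable_tail_Theta: "\<mu> \<in> \<Theta> \<Longrightarrow> integrable \<mu> (\<lambda>y. \<bar>y\<bar> * indicator {y. \<bar>y\<bar> > N} y)"
  by (rule integrable_linear_growth[of _ _ 0 1]) (auto simp: indicator_def)

lemma uniform_tail_integral_small:
  assumes e: "e > 0"
  shows "\<exists>N\<ge>1. \<forall>\<mu>\<in>\<Theta>. integral\<^sup>L \<mu> (\<lambda>y. \<bar>y\<bar> * indicator {y. \<bar>y\<bar> > N} y) \<le> e"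
proof -
  obtain N where N: "N \<ge> 1"
    "\<And>\<mu>. \<mu> \<in> \<Theta> \<Longrightarrow> (\<integral>\<^sup>+ y. ennreal (\<bar>y\<bar> * indicator {y. \<bar>y\<bar> > N} y) \<partial>\<mu>) < ennreal e"
    using uniform_tail_small[OF e] by auto
  have "integral\<^sup>L \<mu> (\<lambda>y. \<bar>y\<bar> * indicator {y. \<bar>y\<bar> > N} y) \<le> e" if \<mu>: "\<mu> \<in> \<Theta>" for \<mu>
  proof -
    have "ennreal (integral\<^sup>L \<mu> (\<lambda>y. \<bar>y\<bar> * indicator {y. \<bar>y\<bar> > N} y))
        = (\<integral>\<^sup>+ y. ennreal (\<bar>y\<bar> * indicator {y. \<bar>y\<bar> > N} y) \<partial>\<mu>)"
      by (rule nn_integral_eq_integral[symmetric, OF integrable_tail_Theta[OF \<mu>]]) auto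
    with N(2)[OF \<mu>] have "ennreal (integral\<^sup>L \<mu> (\<lambda>y. \<bar>y\<bar> * indicator {y. \<bar>y\<bar> > N} y)) < ennreal e"
      by simp
    with e show ?thesis by (simp add: ennreal_less_iff)
  qed
  with N(1) show ?thesis by blast
qed

definition m1 :: real where "m1 = sublin_E \<Theta> (\<lambda>y. \<bar>y\<bar>)"

lemma integral_abs_le_m1:
  assumes "\<mu> \<in> \<Theta>"
  shows "integral\<^sup>L \<mu> (\<lambda>y. \<bar>y\<bar>) \<le> m1"
proof -
  obtain N where N: "N \<ge> 0" "\<forall>\<mu>\<in>\<Theta>. (\<integral>\<^sup>+ y. ennreal \<bar>y\<bar> \<partial>\<mu>) \<le> ennreal N"
    using uniform_first_moment by blast
  have "integral\<^sup>L \<nu> (\<lambda>y. \<bar>y\<bar>) \<le> N" if \<nu>: "\<nu> \<in> \<Theta>" for \<nu>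
  proof -
    have "ennreal (integral\<^sup>L \<nu> (\<lambda>y. \<bar>y\<bar>)) = (\<integral>\<^sup>+ y. ennreal \<bar>y\<bar> \<partial>\<nu>)"
      using integrable_id_Theta[OF \<nu>] by (intro nn_integral_eq_integral[symmetric]) auto
    with N \<nu> show ?thesis by (simp add: ennreal_le_iff[symmetric] del: ennreal_le_iff)
  qed
  then show ?thesis unfolding m1_def by (rule integral_le_sublin_E[OF assms])
qed

lemma m1_nonneg: "0 \<le> m1"
proof -
  obtain \<mu> where "\<mu> \<in> \<Theta>" using Theta_nonempty by auto
  moreover have "0 \<le> integral\<^sup>L \<mu> (\<lambda>y. \<bar>y\<bar>)" by (rule Bochner_Integration.integral_nonneg) simp
  ultimately show ?thesis using integral_abs_le_m1[of \<mu>] by linarith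
qed

lemma integral_one_plus_abs_le:
  assumes \<mu>: "\<mu> \<in> \<Theta>"
  shows "integrable \<mu> (\<lambda>y. 1 + \<bar>y\<bar>)" "integral\<^sup>L \<mu> (\<lambda>y. 1 + \<bar>y\<bar>) \<le> 1 + m1"
proof -
  show i: "integrable \<mu> (\<lambda>y. 1 + \<bar>y\<bar>)"
    using integrable_id_Theta[OF \<mu>] integrable_const_Theta[OF \<mu>] by simp
  have "integral\<^sup>L \<mu> (\<lambda>y. 1 + \<bar>y\<bar>) = 1 + integral\<^sup>L \<mu> (\<lambda>y. \<bar>y\<bar>)"
    using integrable_id_Theta[OF \<mu>] integrable_const_Theta[OF \<mu>] measure_space_Theta[OF \<mu>]
    by (simp add: Bochner_Integration.integral_add)
  with integral_abs_le_m1[OF \<mu>] show "integral\<^sup>L \<mu> (\<lambda>y. 1 + \<bar>y\<bar>) \<le> 1 + m1" by simp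
qed

definition mean :: "real measure \<Rightarrow> real" where "mean \<mu> = integral\<^sup>L \<mu> (\<lambda>y. y)"

lemma abs_mean_le_m1: "\<mu> \<in> \<Theta> \<Longrightarrow> \<bar>mean \<mu>\<bar> \<le> m1"
  using integral_abs_bound[of \<mu> "\<lambda>y. y"] integral_abs_le_m1[of \<mu>] unfolding mean_def by linarith

definition p :: "real \<Rightarrow> real" where "p a = sublin_E \<Theta> (\<lambda>y. a * y)"

lemma integral_mult_id: "integral\<^sup>L \<mu> (\<lambda>y. a * y) = a * mean \<mu>"
  unfolding mean_def by simp

lemma mult_mean_le_p:
  assumes "\<mu> \<in> \<Theta>"
  shows "a * mean \<mu> \<le> p a"
proof -
  have "a * mean \<nu> \<le> \<bar>a\<bar> * m1" if "\<nu> \<in> \<Theta>" for \<nu>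
    using abs_mean_le_m1[OF that] abs_mult[of a "mean \<nu>"]
    by (metis abs_ge_self abs_ge_zero mult_left_mono order_trans)
  then show ?thesis
    unfolding p_def integral_mult_id[symmetric] by (rule integral_le_sublin_E[OF assms])
qed

lemma p_le: "(\<And>\<mu>. \<mu> \<in> \<Theta> \<Longrightarrow> a * mean \<mu> \<le> c) \<Longrightarrow> p a \<le> c"
  unfolding p_def by (rule sublin_E_le) (simp only: integral_mult_id)

lemma abs_p_diff_le: "\<bar>p a - p b\<bar> \<le> m1 * \<bar>a - b\<bar>"
proof -
  have "p a \<le> p b + m1 * \<bar>a - b\<bar>" for a b
  proof (rule p_le)
    fix \<mu> assume \<mu>: "\<mu> \<in> \<Theta>"
    have "(a - b) * mean \<mu> \<le> \<bar>a - b\<bar> * m1"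
      using abs_mean_le_m1[OF \<mu>] abs_mult[of "a - b" "mean \<mu>"]
      by (metis abs_ge_self abs_ge_zero mult_left_mono order_trans)
    with mult_mean_le_p[OF \<mu>, of b] show "a * mean \<mu> \<le> p b + m1 * \<bar>a - b\<bar>"
      by (simp add: algebra_simps)
  qed
  from this[of a b] this[of b a] show ?thesis by (simp add: abs_minus_commute)
qed

lemma p_0: "p 0 = 0"
proof -
  have "p 0 = sublin_E \<Theta> (\<lambda>_. 0)" unfolding p_def by (rule arg_cong[where f = "sublin_E \<Theta>"]) auto
  then show ?thesis by (simp add: sublin_E_const)
qed

lemma abs_p_le: "\<bar>p a\<bar> \<le> m1 * \<bar>a\<bar>"
  using abs_p_diff_le[of a 0] by (simp add: p_0)

lemma continuous_on_p: "continuous_on UNIV p"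
  by (rule holder_imp_continuous_on[of 1 _ _ m1]) (use abs_p_diff_le in simp_all)

lemma integrable_scaled:
  assumes g: "bounded_holder \<beta> B L g" and "0 < \<beta>" and \<mu>: "\<mu> \<in> \<Theta>" and "0 \<le> r"
  shows "integrable \<mu> (\<lambda>y. g (c * y) r)"
  by (rule integrable_linear_growth[OF \<mu> borel_measurable_continuous_onI, of _ B 0])
    (use g assms(2,4) in \<open>auto intro: bounded_holder_continuous_on simp: bounded_holder_def\<close>)

lemma integral_path_le_bound:
  assumes g: "bounded_holder \<beta> B L g" and "0 < \<beta>" and \<mu>: "\<mu> \<in> \<Theta>" and r: "0 \<le> r"
  shows "integral\<^sup>L \<mu> (\<lambda>y. g ((c - r) * y) r) \<le> B"
proof -
  have "\<bar>integral\<^sup>L \<mu> (\<lambda>y. g ((c - r) * y) r)\<bar> \<le> B"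
    by (rule abs_integral_le_Theta[OF \<mu> integrable_scaled[OF g \<open>0 < \<beta>\<close> \<mu> r]])
      (rule bounded_holderD(1)[OF g r])
  then show ?thesis by simp
qed

lemma integral_path_le_sublin_E:
  assumes g: "bounded_holder \<beta> B L g" and "0 < \<beta>" and \<mu>: "\<mu> \<in> \<Theta>" and "0 \<le> r"
  shows "integral\<^sup>L \<mu> (\<lambda>y. g ((c - r) * y) r) \<le> sublin_E \<Theta> (\<lambda>y. g ((c - r) * y) r)"
  using integral_path_le_bound[OF g \<open>0 < \<beta>\<close> _ \<open>0 \<le> r\<close>] by (rule integral_le_sublin_E[OF \<mu>])

lemma sublin_E_path_approx:
  assumes g: "bounded_holder \<beta> B L g" and "0 < \<beta>" and "0 \<le> r" and "e > 0"
  shows "\<exists>\<mu>\<in>\<Theta>. sublin_E \<Theta> (\<lambda>y. g ((c - r) * y) r) - e < integral\<^sup>L \<mu> (\<lambda>y. g ((c - r) * y) r)"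
  using integral_path_le_bound[OF g \<open>0 < \<beta>\<close> _ \<open>0 \<le> r\<close>] \<open>e > 0\<close> by (rule sublin_E_approx)

lemma abs_integral_path_diff_le:
  assumes g: "bounded_holder \<beta> B L g" and \<beta>: "0 < \<beta>" "\<beta> \<le> 1" and \<mu>: "\<mu> \<in> \<Theta>"
    and r: "0 \<le> r" "0 \<le> r'"
  shows "\<bar>integral\<^sup>L \<mu> (\<lambda>y. g ((c - r) * y) r) - integral\<^sup>L \<mu> (\<lambda>y. g ((c - r') * y) r')\<bar>
           \<le> L * (1 + m1) * \<bar>r - r'\<bar> powr \<beta>"
proof -
  have L: "0 \<le> L" using bounded_holder_nonneg_const[OF g] .
  have "\<bar>integral\<^sup>L \<mu> (\<lambda>y. g ((c - r) * y) r) - integral\<^sup>L \<mu> (\<lambda>y. g ((c - r') * y) r')\<bar>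
      \<le> (L * \<bar>r - r'\<bar> powr \<beta>) * integral\<^sup>L \<mu> (\<lambda>y. 1 + \<bar>y\<bar>)"
    using bounded_holder_path_diff[OF g _ \<beta>(2) r] \<beta>(1)
    by (intro abs_integral_diff_le_mult integrable_scaled[OF g \<beta>(1) \<mu>] r integral_one_plus_abs_le[OF \<mu>])
      (simp add: mult.assoc)
  also have "\<dots> \<le> (L * \<bar>r - r'\<bar> powr \<beta>) * (1 + m1)"
    using integral_one_plus_abs_le[OF \<mu>] L by (intro mult_left_mono) auto
  finally show ?thesis by (simp add: algebra_simps)
qed

lemma continuous_on_sublin_E_path:
  assumes g: "bounded_holder \<beta> B L g" and \<beta>: "0 < \<beta>" "\<beta> \<le> 1"
  shows "continuous_on {0..} (\<lambda>r. sublin_E \<Theta> (\<lambda>y. g ((c - r) * y) r))"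
proof (rule holder_imp_continuous_on[OF \<beta>(1), of _ _ "L * (1 + m1)"])
  have le: "sublin_E \<Theta> (\<lambda>y. g ((c - r) * y) r) \<le> sublin_E \<Theta> (\<lambda>y. g ((c - r') * y) r') + L * (1 + m1) * \<bar>r - r'\<bar> powr \<beta>"
    if r: "0 \<le> r" "0 \<le> r'" for r r'
  proof (rule sublin_E_le_add)
    fix \<nu> assume \<nu>: "\<nu> \<in> \<Theta>"
    show "integral\<^sup>L \<nu> (\<lambda>y. g ((c - r') * y) r') \<le> B"
      using integral_path_le_bound[OF g \<beta>(1) \<nu> r(2)] .
    show "integral\<^sup>L \<nu> (\<lambda>y. g ((c - r) * y) r) \<le> integral\<^sup>L \<nu> (\<lambda>y. g ((c - r') * y) r') + L * (1 + m1) * \<bar>r - r'\<bar> powr \<beta>"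
      using abs_integral_path_diff_le[OF g \<beta> \<nu> r, where c = c] by linarith
  qed
  fix r r' :: real assume "r \<in> {0..}" "r' \<in> {0..}"
  then show "\<bar>sublin_E \<Theta> (\<lambda>y. g ((c - r) * y) r) - sublin_E \<Theta> (\<lambda>y. g ((c - r') * y) r')\<bar>
      \<le> L * (1 + m1) * \<bar>r - r'\<bar> powr \<beta>"
    using le[of r r'] le[of r' r] by (auto simp: abs_minus_commute)
qed

definition moment_bound :: "real \<Rightarrow> real \<Rightarrow> bool" where
  "moment_bound a M \<longleftrightarrow>
     (\<forall>\<mu>\<in>\<Theta>. integrable \<mu> (\<lambda>y. \<bar>y\<bar> powr a) \<and> integral\<^sup>L \<mu> (\<lambda>y. \<bar>y\<bar> powr a) \<le> M)"

lemma moment_bound_sublin_E_nn: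
  assumes fin: "sublin_E_nn \<Theta> (\<lambda>y. \<bar>y\<bar> powr a) \<noteq> \<infinity>"
  shows "moment_bound a (enn2real (sublin_E_nn \<Theta> (\<lambda>y. \<bar>y\<bar> powr a)))"
  unfolding moment_bound_def
proof (intro ballI conjI)
  fix \<mu> assume \<mu>: "\<mu> \<in> \<Theta>"
  define E where "E = sublin_E_nn \<Theta> (\<lambda>y. \<bar>y\<bar> powr a)"
  have E_fin: "E < \<top>" using fin by (simp add: E_def top.not_eq_extremum)
  then have E: "E = ennreal (enn2real E)" by simp
  have nn: "(\<integral>\<^sup>+ y. ennreal (\<bar>y\<bar> powr a) \<partial>\<mu>) \<le> E"
    unfolding E_def sublin_E_nn_def using \<mu> by (rule SUP_upper)
  show i: "integrable \<mu> (\<lambda>y. \<bar>y\<bar> powr a)"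
  proof (rule integrableI_bounded)
    show "(\<lambda>y. \<bar>y\<bar> powr a) \<in> borel_measurable \<mu>" by (rule measurable_Theta[OF \<mu>]) measurable
    show "(\<integral>\<^sup>+ y. ennreal (norm (\<bar>y\<bar> powr a)) \<partial>\<mu>) < \<infinity>"
      using le_less_trans[OF nn E_fin] by simp
  qed
  have "ennreal (integral\<^sup>L \<mu> (\<lambda>y. \<bar>y\<bar> powr a)) = (\<integral>\<^sup>+ y. ennreal (\<bar>y\<bar> powr a) \<partial>\<mu>)"
    by (rule nn_integral_eq_integral[symmetric, OF i]) simp
  with nn E have "ennreal (integral\<^sup>L \<mu> (\<lambda>y. \<bar>y\<bar> powr a)) \<le> ennreal (enn2real E)" by simp
  then show "integral\<^sup>L \<mu> (\<lambda>y. \<bar>y\<bar> powr a) \<le> enn2real (sublin_E_nn \<Theta> (\<lambda>y. \<bar>y\<bar> powr a))"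
    by (simp add: E_def ennreal_le_iff)
qed

lemma integrable_abs_powr: "\<mu> \<in> \<Theta> \<Longrightarrow> 0 \<le> a \<Longrightarrow> a \<le> 1 \<Longrightarrow> integrable \<mu> (\<lambda>y. \<bar>y\<bar> powr a)"
  by (rule integrable_linear_growth[of _ _ 1 1]) (auto intro: powr_le_one_plus)

text \<open>An instance of \<open>E|\<xi>|\<^sup>\<alpha> E|\<xi>| \<le> E|\<xi>|\<^sup>1\<^sup>+\<^sup>\<alpha>\<close>, with the two factors taken under different
  measures; it follows by integrating Young's inequality in both variables.\<close>
lemma integral_abs_powr_mult_integral_abs_le:
  assumes \<alpha>: "0 < \<alpha>" "\<alpha> \<le> 1" and M: "moment_bound (1 + \<alpha>) M" and \<mu>: "\<mu> \<in> \<Theta>" and \<nu>: "\<nu> \<in> \<Theta>"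
  shows "integral\<^sup>L \<mu> (\<lambda>y. \<bar>y\<bar> powr \<alpha>) * integral\<^sup>L \<nu> (\<lambda>z. \<bar>z\<bar>) \<le> M"
proof -
  define P where "P = integral\<^sup>L \<mu> (\<lambda>y. \<bar>y\<bar> powr \<alpha>)"
  have mom: "integrable \<kappa> (\<lambda>y. \<bar>y\<bar> powr (1 + \<alpha>))" "integral\<^sup>L \<kappa> (\<lambda>y. \<bar>y\<bar> powr (1 + \<alpha>)) \<le> M"
    if "\<kappa> \<in> \<Theta>" for \<kappa> using M that by (auto simp: moment_bound_def)
  have young_z: "P * \<bar>z\<bar> \<le> \<alpha> / (1 + \<alpha>) * M + \<bar>z\<bar> powr (1 + \<alpha>) / (1 + \<alpha>)" for z
  proof -
    have "integral\<^sup>L \<mu> (\<lambda>y. \<bar>y\<bar> powr \<alpha> * \<bar>z\<bar>) \<le> integral\<^sup>L \<mu> (\<lambda>y. \<bar>z\<bar> powr (1 + \<alpha>) / (1 + \<alpha>))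
         + \<alpha> / (1 + \<alpha>) * integral\<^sup>L \<mu> (\<lambda>y. \<bar>y\<bar> powr (1 + \<alpha>))"
      using Youngs_inequality_powr[of _ "\<bar>z\<bar>" \<alpha>] \<alpha> integrable_abs_powr[OF \<mu>, of \<alpha>]
      by (intro integral_le_integral_add_mult integrable_const_Theta[OF \<mu>] mom[OF \<mu>])
        (auto simp: algebra_simps)
    also have "\<dots> \<le> \<bar>z\<bar> powr (1 + \<alpha>) / (1 + \<alpha>) + \<alpha> / (1 + \<alpha>) * M"
      using mom[OF \<mu>] \<alpha> measure_space_Theta[OF \<mu>] by (simp add: mult_left_mono divide_right_mono)
    finally show ?thesis by (simp add: P_def algebra_simps)
  qed
  have "P * integral\<^sup>L \<nu> (\<lambda>z. \<bar>z\<bar>) \<le> integral\<^sup>L \<nu> (\<lambda>z. \<alpha> / (1 + \<alpha>) * M) + 1 / (1 + \<alpha>) * integral\<^sup>L \<nu> (\<lambda>z. \<bar>z\<bar> powr (1 + \<alpha>))"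
    using young_z integrable_id_Theta[OF \<nu>]
    by (subst integral_mult_right_zero[symmetric],
        intro integral_le_integral_add_mult integrable_const_Theta[OF \<nu>] mom[OF \<nu>]) auto
  also have "\<dots> \<le> \<alpha> / (1 + \<alpha>) * M + 1 / (1 + \<alpha>) * M"
    using mom[OF \<nu>] \<alpha> measure_space_Theta[OF \<nu>] by (simp add: divide_right_mono)
  also have "\<dots> = (\<alpha> / (1 + \<alpha>) + 1 / (1 + \<alpha>)) * M" by (simp add: distrib_right)
  also have "\<alpha> / (1 + \<alpha>) + 1 / (1 + \<alpha>) = 1" using \<alpha> by (simp add: field_simps)
  finally show ?thesis by (simp add: P_def)
qed

lemma m1_mult_integral_abs_powr_le:
  assumes \<alpha>: "0 < \<alpha>" "\<alpha> \<le> 1" and M: "moment_bound (1 + \<alpha>) M" and \<mu>: "\<mu> \<in> \<Theta>"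
  shows "m1 * integral\<^sup>L \<mu> (\<lambda>y. \<bar>y\<bar> powr \<alpha>) \<le> M"
proof (cases "integral\<^sup>L \<mu> (\<lambda>y. \<bar>y\<bar> powr \<alpha>) = 0")
  case True
  have "0 \<le> integral\<^sup>L \<mu> (\<lambda>y. \<bar>y\<bar> powr (1 + \<alpha>))" by (rule Bochner_Integration.integral_nonneg) simp
  moreover have "integral\<^sup>L \<mu> (\<lambda>y. \<bar>y\<bar> powr (1 + \<alpha>)) \<le> M"
    using M \<mu> unfolding moment_bound_def by blast
  ultimately have "0 \<le> M" by linarith
  with True show ?thesis by simp
next
  case False
  then have P: "0 < integral\<^sup>L \<mu> (\<lambda>y. \<bar>y\<bar> powr \<alpha>)"
    by (simp add: order_less_le Bochner_Integration.integral_nonneg)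
  have "m1 \<le> M / integral\<^sup>L \<mu> (\<lambda>y. \<bar>y\<bar> powr \<alpha>)" unfolding m1_def
    using integral_abs_powr_mult_integral_abs_le[OF \<alpha> M \<mu>] P
    by (intro sublin_E_le) (simp add: pos_le_divide_eq mult.commute)
  with P show ?thesis by (simp add: pos_le_divide_eq mult.commute)
qed

end

section \<open>The expectation of a \<open>C\<^sup>1\<^sup>,\<^sup>\<alpha>\<close> function along the path \<open>(tb - r) \<xi>\<close>\<close>

locale C1_alpha_function = sublinear_expectation +
  fixes \<alpha> :: real and v vx vt :: "real \<Rightarrow> real \<Rightarrow> real" and B C :: real
  assumes alpha: "0 < \<alpha>" "\<alpha> \<le> 1"
    and v_bounded: "\<And>x s. 0 \<le> s \<Longrightarrow> \<bar>v x s\<bar> \<le> B"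
    and vx_bounded: "\<And>x s. 0 \<le> s \<Longrightarrow> \<bar>vx x s\<bar> \<le> B"
    and vt_bounded: "\<And>x s. 0 \<le> s \<Longrightarrow> \<bar>vt x s\<bar> \<le> B"
    and vx_deriv: "\<And>x s. 0 \<le> s \<Longrightarrow> ((\<lambda>y. v y s) has_real_derivative vx x s) (at x)"
    and vt_deriv: "\<And>x s. 0 \<le> s \<Longrightarrow> ((\<lambda>r. v x r) has_real_derivative vt x s) (at s within {0..})"
    and vx_holder: "\<And>x y s r. 0 \<le> s \<Longrightarrow> 0 \<le> r \<Longrightarrow> \<bar>vx x s - vx y r\<bar> \<le> C * (\<bar>x - y\<bar> + \<bar>s - r\<bar>) powr \<alpha>"
    and vt_holder: "\<And>x y s r. 0 \<le> s \<Longrightarrow> 0 \<le> r \<Longrightarrow> \<bar>vt x s - vt y r\<bar> \<le> C * (\<bar>x - y\<bar> + \<bar>s - r\<bar>) powr \<alpha>"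

lemma C_b_1_alpha_C1_alpha_function:
  assumes "sublinear_expectation \<Theta>" "0 < \<alpha>" "\<alpha> \<le> 1" and reg: "C_b_1_alpha \<alpha> v vx vt"
  obtains B C where "C1_alpha_function \<Theta> \<alpha> v vx vt B C"
proof -
  obtain B C where B: "\<And>x s. 0 \<le> s \<Longrightarrow> \<bar>v x s\<bar> \<le> B \<and> \<bar>vx x s\<bar> \<le> B \<and> \<bar>vt x s\<bar> \<le> B"
    and C: "\<And>x y s r. 0 \<le> s \<Longrightarrow> 0 \<le> r \<Longrightarrow>
      \<bar>vx x s - vx y r\<bar> \<le> C * dist (x, s) (y, r) powr \<alpha> \<and> \<bar>vt x s - vt y r\<bar> \<le> C * dist (x, s) (y, r) powr \<alpha>"
    using reg unfolding C_b_1_alpha_def by blast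
  have "\<bar>vx 1 0 - vx 0 0\<bar> \<le> C * dist (1::real, 0::real) (0, 0) powr \<alpha>" using C by auto
  then have "0 \<le> C" by (simp add: dist_Pair_Pair)
  have "dist (x, s) (y, r) powr \<alpha> \<le> (\<bar>x - y\<bar> + \<bar>s - r\<bar>) powr \<alpha>" for x s y r :: real
    using \<open>0 < \<alpha>\<close> sqrt_sum_squares_le_sum_abs
    by (intro powr_mono2) (auto simp: dist_Pair_Pair dist_real_def)
  then have dist_le: "C * dist (x, s) (y, r) powr \<alpha> \<le> C * (\<bar>x - y\<bar> + \<bar>s - r\<bar>) powr \<alpha>"
    for x s y r :: real using \<open>0 \<le> C\<close> by (rule mult_left_mono)
  have "\<bar>vx x s - vx y r\<bar> \<le> C * (\<bar>x - y\<bar> + \<bar>s - r\<bar>) powr \<alpha>"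
    and "\<bar>vt x s - vt y r\<bar> \<le> C * (\<bar>x - y\<bar> + \<bar>s - r\<bar>) powr \<alpha>"
    if "0 \<le> s" "0 \<le> r" for x y s r
    using C[OF that, of x y] dist_le[of x s y r] by linarith+
  moreover have "((\<lambda>y. v y s) has_real_derivative vx x s) (at x)"
    and "((\<lambda>r. v x r) has_real_derivative vt x s) (at s within {0..})" if "0 \<le> s" for x s
    using reg that unfolding C_b_1_alpha_def by blast+
  ultimately show ?thesis
    using assms(2,3) B
    by (intro that[of B C] C1_alpha_function.intro[OF assms(1)] C1_alpha_function_axioms.intro) auto
qed

context C1_alpha_function
begin

lemma B_nonneg: "0 \<le> B"
  using v_bounded[of 0 0] by simp

lemma C_nonneg: "0 \<le> C"
  using vx_holder[of 0 0 1 0] by simp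

lemma bounded_holder_vx: "bounded_holder \<alpha> B C vx"
  unfolding bounded_holder_def using vx_bounded vx_holder by blast

lemma bounded_holder_vt: "bounded_holder \<alpha> B C vt"
  unfolding bounded_holder_def using vt_bounded vt_holder by blast

lemma v_deviation_x:
  assumes s: "0 \<le> s" and dev: "\<And>z. min x x' \<le> z \<Longrightarrow> z \<le> max x x' \<Longrightarrow> \<bar>vx z s - c\<bar> \<le> e"
  shows "\<bar>v x' s - v x s - (x' - x) * c\<bar> \<le> \<bar>x' - x\<bar> * e"
proof (cases "x \<le> x'")
  case True
  have "\<bar>v x' s - v x s - (x' - x) * c\<bar> \<le> (x' - x) * e"
    by (rule mvt_deviation_bound[OF True, where f = "\<lambda>y. v y s" and f' = "\<lambda>z. vx z s"])
      (use True dev in \<open>auto intro: has_field_derivative_at_within vx_deriv[OF s]\<close>)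
  with True show ?thesis by simp
next
  case False
  have "\<bar>v x s - v x' s - (x - x') * c\<bar> \<le> (x - x') * e"
    by (rule mvt_deviation_bound[where f = "\<lambda>y. v y s" and f' = "\<lambda>z. vx z s"])
      (use False dev in \<open>auto intro: has_field_derivative_at_within vx_deriv[OF s]\<close>)
  moreover have "\<bar>v x' s - v x s - (x' - x) * c\<bar> = \<bar>v x s - v x' s - (x - x') * c\<bar>"
    by (simp add: abs_minus_commute algebra_simps)
  ultimately show ?thesis using False by simp
qed

lemma v_deviation_t:
  assumes "0 \<le> s" "s \<le> s'" and dev: "\<And>z. s \<le> z \<Longrightarrow> z \<le> s' \<Longrightarrow> \<bar>vt x z - c\<bar> \<le> e"
  shows "\<bar>v x s' - v x s - (s' - s) * c\<bar> \<le> (s' - s) * e"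
  by (rule mvt_deviation_bound[OF assms(2), where f = "\<lambda>r. v x r" and f' = "\<lambda>z. vt x z"])
    (use assms in \<open>auto intro: DERIV_subset[OF vt_deriv]\<close>)

lemma v_lipschitz_x: "0 \<le> s \<Longrightarrow> \<bar>v x' s - v x s\<bar> \<le> B * \<bar>x' - x\<bar>"
  using v_deviation_x[of s x x' 0 B] vx_bounded by (simp add: mult.commute)

lemma v_lipschitz_t: "0 \<le> s \<Longrightarrow> 0 \<le> s' \<Longrightarrow> \<bar>v x s' - v x s\<bar> \<le> B * \<bar>s' - s\<bar>"
  using v_deviation_t[of s s' x 0 B] v_deviation_t[of s' s x 0 B] vt_bounded
  by (cases "s \<le> s'") (auto simp: abs_minus_commute mult.commute)

lemma bounded_holder_v: "bounded_holder 1 B B v"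
  unfolding bounded_holder_def
proof (intro conjI allI impI)
  fix x x' r r' :: real assume r: "0 \<le> r" "0 \<le> r'"
  have "\<bar>v x r - v x' r\<bar> \<le> B * \<bar>x - x'\<bar>" using v_lipschitz_x[OF r(1), of x x'] .
  moreover have "\<bar>v x' r - v x' r'\<bar> \<le> B * \<bar>r - r'\<bar>" using v_lipschitz_t[OF r(2,1), of x'] .
  ultimately have "\<bar>v x r - v x' r'\<bar> \<le> B * \<bar>x - x'\<bar> + B * \<bar>r - r'\<bar>" by linarith
  then show "\<bar>v x r - v x' r'\<bar> \<le> B * (\<bar>x - x'\<bar> + \<bar>r - r'\<bar>) powr 1"
    by (simp add: distrib_left)
qed (use v_bounded in auto)

definition K :: "real \<Rightarrow> real" where "K r = holder_seminorm \<alpha> (\<lambda>x. vx x r)"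

lemma vx_holder_x: "0 \<le> r \<Longrightarrow> \<bar>vx x r - vx y r\<bar> \<le> C * \<bar>x - y\<bar> powr \<alpha>"
  using vx_holder[of r r x y] by simp

lemma abs_vx_diff_le_K: "0 \<le> r \<Longrightarrow> \<bar>vx x r - vx y r\<bar> \<le> K r * \<bar>x - y\<bar> powr \<alpha>"
  unfolding K_def by (rule abs_diff_le_holder_seminorm[OF vx_holder_x])

lemma K_le_C: "0 \<le> r \<Longrightarrow> K r \<le> C"
  unfolding K_def by (rule holder_seminorm_le[OF vx_holder_x])

lemma K_nonneg: "0 \<le> r \<Longrightarrow> 0 \<le> K r"
  unfolding K_def by (rule holder_seminorm_nonneg[OF vx_holder_x])

text \<open>\<open>K\<close> is a supremum of difference quotients, each continuous in time.\<close>
lemma lower_semicontinuous_on_K: "lower_semicontinuous_on {0..} K"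
proof -
  have "continuous_on {0..} (\<lambda>r. vx x r)" for x
    by (rule holder_imp_continuous_on[OF alpha(1), of _ _ C]) (use vx_holder[of _ _ x x] in auto)
  then have "continuous_on {0..} (\<lambda>r. \<bar>vx (fst q) r - vx (snd q) r\<bar> / \<bar>fst q - snd q\<bar> powr \<alpha>)"
    if "q \<in> {q. fst q \<noteq> snd q}" for q
    using that by (intro continuous_intros) auto
  moreover have "bdd_above ((\<lambda>q. \<bar>vx (fst q) r - vx (snd q) r\<bar> / \<bar>fst q - snd q\<bar> powr \<alpha>) ` {q. fst q \<noteq> snd q})"
    if "r \<in> {0..}" for r
    using bdd_above_holder_quotients[OF vx_holder_x, of r] that
    unfolding holder_quotients_eq_image by simp
  moreover have "(0, 1) \<in> {q :: real \<times> real. fst q \<noteq> snd q}" by simp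
  ultimately show ?thesis
    unfolding K_def[abs_def] holder_seminorm_def holder_quotients_eq_image
    by (intro lower_semicontinuous_on_SUP) blast+
qed

lemma K_integrable_on: "0 \<le> t \<Longrightarrow> K integrable_on {t..tb}"
  using K_nonneg K_le_C
  by (intro lower_semicontinuous_on_integrable_on[of _ _ K C]
      lower_semicontinuous_on_subset[OF lower_semicontinuous_on_K]) auto

lemma K_eq_0_if_integral_eq_0:
  assumes t: "0 \<le> t" and "integral {t..tb} K = 0" and r: "t < r" "r < tb"
  shows "K r = 0"
proof (rule lower_semicontinuous_on_integral_eq_0[OF _ K_integrable_on[OF t] _ assms(2) r])
  show "lower_semicontinuous_on {t..tb} K"
    using t by (intro lower_semicontinuous_on_subset[OF lower_semicontinuous_on_K]) auto
qed (use t K_nonneg in auto)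

lemma v_taylor_x:
  assumes r: "0 \<le> r"
  shows "\<bar>v x' r - v x r - (x' - x) * vx x r\<bar> \<le> K r * \<bar>x' - x\<bar> powr (1 + \<alpha>)"
proof -
  have "\<bar>v x' r - v x r - (x' - x) * vx x r\<bar> \<le> \<bar>x' - x\<bar> * (K r * \<bar>x' - x\<bar> powr \<alpha>)"
  proof (rule v_deviation_x[OF r])
    fix z assume "min x x' \<le> z" "z \<le> max x x'"
    then have "\<bar>z - x\<bar> \<le> \<bar>x' - x\<bar>" by (auto simp: min_def max_def split: if_splits)
    then have "K r * \<bar>z - x\<bar> powr \<alpha> \<le> K r * \<bar>x' - x\<bar> powr \<alpha>"
      using alpha K_nonneg[OF r] by (intro mult_left_mono powr_mono2) auto
    with abs_vx_diff_le_K[OF r, of z x] show "\<bar>vx z r - vx x r\<bar> \<le> K r * \<bar>x' - x\<bar> powr \<alpha>" by linarith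
  qed
  also have "\<dots> = K r * \<bar>x' - x\<bar> powr (1 + \<alpha>)"
    by (simp add: powr_mult_base[OF abs_ge_zero] mult.left_commute)
  finally show ?thesis .
qed

lemma v_taylor_t:
  assumes r: "0 \<le> r" and h: "0 \<le> h"
  shows "\<bar>v x (r + h) - v x r - h * vt x r\<bar> \<le> C * h powr (1 + \<alpha>)"
proof -
  have "\<bar>v x (r + h) - v x r - (r + h - r) * vt x r\<bar> \<le> (r + h - r) * (C * h powr \<alpha>)"
  proof (rule v_deviation_t)
    fix z assume z: "r \<le> z" "z \<le> r + h"
    have "\<bar>vt x z - vt x r\<bar> \<le> C * (\<bar>x - x\<bar> + \<bar>z - r\<bar>) powr \<alpha>" using vt_holder[of z r x x] z r by simp
    also have "\<dots> \<le> C * h powr \<alpha>" using z alpha C_nonneg by (intro mult_left_mono powr_mono2) auto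
    finally show "\<bar>vt x z - vt x r\<bar> \<le> C * h powr \<alpha>" .
  qed (use r h in auto)
  then show ?thesis using h by (simp add: powr_mult_base mult.left_commute)
qed

definition f :: "real \<Rightarrow> real \<Rightarrow> real" where "f x r = vt x r - p (vx x r)"

lemma bounded_holder_f: "bounded_holder \<alpha> (B + m1 * B) (C * (1 + m1)) f"
  unfolding bounded_holder_def
proof (intro conjI allI impI)
  fix x x' r r' :: real assume r: "0 \<le> r" "0 \<le> r'"
  let ?d = "C * (\<bar>x - x'\<bar> + \<bar>r - r'\<bar>) powr \<alpha>"
  have "\<bar>p (vx x r) - p (vx x' r')\<bar> \<le> m1 * \<bar>vx x r - vx x' r'\<bar>" by (rule abs_p_diff_le)
  also have "\<dots> \<le> m1 * ?d" using vx_holder[OF r] m1_nonneg by (rule mult_left_mono)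
  finally have "\<bar>p (vx x r) - p (vx x' r')\<bar> \<le> m1 * ?d" .
  moreover have "\<bar>vt x r - vt x' r'\<bar> \<le> ?d" using vt_holder[OF r] .
  ultimately have "\<bar>f x r - f x' r'\<bar> \<le> ?d + m1 * ?d" unfolding f_def by linarith
  then show "\<bar>f x r - f x' r'\<bar> \<le> C * (1 + m1) * (\<bar>x - x'\<bar> + \<bar>r - r'\<bar>) powr \<alpha>"
    by (simp add: algebra_simps)
next
  fix x r :: real assume "0 \<le> r"
  have "\<bar>p (vx x r)\<bar> \<le> m1 * \<bar>vx x r\<bar>" by (rule abs_p_le)
  also have "\<dots> \<le> m1 * B" using vx_bounded[OF \<open>0 \<le> r\<close>] m1_nonneg by (rule mult_left_mono)
  finally have "\<bar>p (vx x r)\<bar> \<le> m1 * B" .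
  with vt_bounded[OF \<open>0 \<le> r\<close>, of x] show "\<bar>f x r\<bar> \<le> B + m1 * B" unfolding f_def by linarith
qed

definition psi :: "real \<Rightarrow> real \<Rightarrow> real" where
  "psi tb r = sublin_E \<Theta> (\<lambda>y. v ((tb - r) * y) r)"

definition psi_mu :: "real measure \<Rightarrow> real \<Rightarrow> real \<Rightarrow> real" where
  "psi_mu \<mu> tb r = integral\<^sup>L \<mu> (\<lambda>y. v ((tb - r) * y) r)"

definition Ef :: "real \<Rightarrow> real \<Rightarrow> real" where
  "Ef tb r = sublin_E \<Theta> (\<lambda>y. f ((tb - r) * y) r)"

definition Ef_neg :: "real \<Rightarrow> real \<Rightarrow> real" where
  "Ef_neg tb r = sublin_E \<Theta> (\<lambda>y. - f ((tb - r) * y) r)"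

lemma psi_at_end: "psi tb tb = v 0 tb"
  by (simp add: psi_def sublin_E_const)

lemma continuous_on_psi: "continuous_on {0..} (psi tb)"
  unfolding psi_def[abs_def] by (rule continuous_on_sublin_E_path[OF bounded_holder_v]) simp_all

lemma continuous_on_Ef: "continuous_on {0..} (Ef tb)"
  unfolding Ef_def[abs_def] by (rule continuous_on_sublin_E_path[OF bounded_holder_f alpha])

lemma continuous_on_Ef_neg: "continuous_on {0..} (Ef_neg tb)"
  unfolding Ef_neg_def[abs_def]
  by (rule continuous_on_sublin_E_path[OF bounded_holder_uminus[OF bounded_holder_f] alpha])

lemma psi_mu_le_psi: "\<mu> \<in> \<Theta> \<Longrightarrow> 0 \<le> r \<Longrightarrow> psi_mu \<mu> tb r \<le> psi tb r"
  unfolding psi_mu_def psi_def by (rule integral_path_le_sublin_E[OF bounded_holder_v]) simp_all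

lemma psi_approx: "0 \<le> r \<Longrightarrow> e > 0 \<Longrightarrow> \<exists>\<mu>\<in>\<Theta>. psi tb r - e < psi_mu \<mu> tb r"
  unfolding psi_mu_def psi_def by (rule sublin_E_path_approx[OF bounded_holder_v]) simp_all

lemma abs_psi_mu_diff_le:
  "\<mu> \<in> \<Theta> \<Longrightarrow> 0 \<le> r \<Longrightarrow> 0 \<le> r' \<Longrightarrow> \<bar>psi_mu \<mu> tb r - psi_mu \<mu> tb r'\<bar> \<le> B * (1 + m1) * \<bar>r - r'\<bar>"
  using abs_integral_path_diff_le[OF bounded_holder_v zero_less_one order_refl] unfolding psi_mu_def by simp

lemma integral_f_le_Ef: "\<mu> \<in> \<Theta> \<Longrightarrow> 0 \<le> r \<Longrightarrow> integral\<^sup>L \<mu> (\<lambda>y. f ((tb - r) * y) r) \<le> Ef tb r"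
  unfolding Ef_def by (rule integral_path_le_sublin_E[OF bounded_holder_f alpha(1)])

lemma integral_neg_f_le_Ef_neg:
  "\<mu> \<in> \<Theta> \<Longrightarrow> 0 \<le> r \<Longrightarrow> integral\<^sup>L \<mu> (\<lambda>y. - f ((tb - r) * y) r) \<le> Ef_neg tb r"
  unfolding Ef_neg_def
  by (rule integral_path_le_sublin_E[OF bounded_holder_uminus[OF bounded_holder_f] alpha(1)])

lemma integrable_v_scaled: "\<mu> \<in> \<Theta> \<Longrightarrow> 0 \<le> r \<Longrightarrow> integrable \<mu> (\<lambda>y. v (c * y) r)"
  by (rule integrable_scaled[OF bounded_holder_v]) simp_all

lemma integrable_vt_scaled: "\<mu> \<in> \<Theta> \<Longrightarrow> 0 \<le> r \<Longrightarrow> integrable \<mu> (\<lambda>y. vt (c * y) r)"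
  by (rule integrable_scaled[OF bounded_holder_vt alpha(1)])

lemma integrable_mult_vx_scaled: "\<mu> \<in> \<Theta> \<Longrightarrow> 0 \<le> r \<Longrightarrow> integrable \<mu> (\<lambda>y. y * vx (c * y) r)"
proof (rule integrable_linear_growth[of _ _ 0 B])
  assume "0 \<le> r"
  show "(\<lambda>y. y * vx (c * y) r) \<in> borel_measurable borel"
    using bounded_holder_scaled_measurable[OF bounded_holder_vx alpha(1) \<open>0 \<le> r\<close>] by measurable
  show "\<bar>y * vx (c * y) r\<bar> \<le> 0 + B * \<bar>y\<bar>" for y
    using mult_left_mono[OF vx_bounded[OF \<open>0 \<le> r\<close>, of "c * y"] abs_ge_zero[of y]]
    by (simp add: abs_mult mult.commute)
qed

lemma integrable_p_vx_scaled: "\<mu> \<in> \<Theta> \<Longrightarrow> 0 \<le> r \<Longrightarrow> integrable \<mu> (\<lambda>y. p (vx (c * y) r))"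
proof (rule integrable_linear_growth[of _ _ "m1 * B" 0])
  assume "0 \<le> r"
  show "(\<lambda>y. p (vx (c * y) r)) \<in> borel_measurable borel"
    by (intro borel_measurable_continuous_onI continuous_on_compose2[OF continuous_on_p]
        bounded_holder_continuous_on[OF bounded_holder_vx alpha(1) \<open>0 \<le> r\<close>]) simp
  have "\<bar>p (vx (c * y) r)\<bar> \<le> m1 * \<bar>vx (c * y) r\<bar>" for y by (rule abs_p_le)
  also have "m1 * \<bar>vx (c * y) r\<bar> \<le> m1 * B" for y
    using vx_bounded[OF \<open>0 \<le> r\<close>] m1_nonneg by (rule mult_left_mono)
  finally show "\<bar>p (vx (c * y) r)\<bar> \<le> m1 * B + 0 * \<bar>y\<bar>" for y by simp
qed

text \<open>Time derivative of \<open>v((tb - r) y, r)\<close>, the integrand of \<open>psi tb r\<close>.\<close>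
definition path_deriv :: "real \<Rightarrow> real \<Rightarrow> real \<Rightarrow> real" where
  "path_deriv tb r y = - y * vx ((tb - r) * y) r + vt ((tb - r) * y) r"

lemma integrable_path_deriv: "\<mu> \<in> \<Theta> \<Longrightarrow> 0 \<le> r \<Longrightarrow> integrable \<mu> (path_deriv tb r)"
  using integrable_mult_vx_scaled integrable_vt_scaled unfolding path_deriv_def[abs_def] by auto

lemma path_increment_remainder_holder:
  assumes r: "0 \<le> r" and h: "0 < h"
  shows "\<bar>v ((lam - h) * y) (r + h) - v (lam * y) r - h * (- y * vx (lam * y) r + vt (lam * y) r)\<bar>
           \<le> C * h powr (1 + \<alpha>) * (1 + \<bar>y\<bar> powr \<alpha> + \<bar>y\<bar> powr (1 + \<alpha>))"
proof -
  define x where "x = lam * y"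
  define x' where "x' = (lam - h) * y"
  have xx: "\<bar>x' - x\<bar> = h * \<bar>y\<bar>" using h by (simp add: x_def x'_def algebra_simps abs_mult)
  have h_powr: "h powr (1 + \<alpha>) = h * h powr \<alpha>" using h by (simp add: powr_mult_base)
  have time: "\<bar>v x' (r + h) - v x' r - h * vt x' r\<bar> \<le> C * h powr (1 + \<alpha>)"
    using v_taylor_t[OF r, of h x'] h by simp
  have "\<bar>vt x' r - vt x r\<bar> \<le> C * (h powr \<alpha> * \<bar>y\<bar> powr \<alpha>)"
    using vt_holder[OF r r, of x' x] xx h by (simp add: powr_mult)
  then have "\<bar>h * (vt x' r - vt x r)\<bar> \<le> h * (C * (h powr \<alpha> * \<bar>y\<bar> powr \<alpha>))"
    using h by (simp add: abs_mult mult_left_mono)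
  also have "\<dots> = C * h powr (1 + \<alpha>) * \<bar>y\<bar> powr \<alpha>" unfolding h_powr by (simp add: algebra_simps)
  finally have shift: "\<bar>h * (vt x' r - vt x r)\<bar> \<le> C * h powr (1 + \<alpha>) * \<bar>y\<bar> powr \<alpha>" .
  have "\<bar>v x' r - v x r - (x' - x) * vx x r\<bar> \<le> K r * (h powr (1 + \<alpha>) * \<bar>y\<bar> powr (1 + \<alpha>))"
    using v_taylor_x[OF r, of x' x] xx h by (simp add: powr_mult)
  also have "\<dots> \<le> C * (h powr (1 + \<alpha>) * \<bar>y\<bar> powr (1 + \<alpha>))"
    using K_le_C[OF r] by (rule mult_right_mono) simp
  finally have space: "\<bar>v x' r - v x r - (x' - x) * vx x r\<bar> \<le> C * h powr (1 + \<alpha>) * \<bar>y\<bar> powr (1 + \<alpha>)"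
    by (simp add: mult.assoc)
  have "v x' (r + h) - v x r - h * (- y * vx x r + vt x r)
      = (v x' (r + h) - v x' r - h * vt x' r) + h * (vt x' r - vt x r) + (v x' r - v x r - (x' - x) * vx x r)"
    using h by (simp add: x_def x'_def algebra_simps)
  moreover have "C * h powr (1 + \<alpha>) * (1 + \<bar>y\<bar> powr \<alpha> + \<bar>y\<bar> powr (1 + \<alpha>))
      = C * h powr (1 + \<alpha>) + C * h powr (1 + \<alpha>) * \<bar>y\<bar> powr \<alpha> + C * h powr (1 + \<alpha>) * \<bar>y\<bar> powr (1 + \<alpha>)"
    by (simp add: algebra_simps)
  ultimately show ?thesis using time shift space unfolding x_def x'_def by linarith
qed

lemma path_increment_remainder_crude:
  assumes r: "0 \<le> r" and h: "0 < h"
  shows "\<bar>v ((lam - h) * y) (r + h) - v (lam * y) r - h * (- y * vx (lam * y) r + vt (lam * y) r)\<bar>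
           \<le> 2 * B * h * (1 + \<bar>y\<bar>)"
proof -
  have rh: "0 \<le> r + h" using r h by simp
  have "\<bar>y * vx (lam * y) r\<bar> \<le> \<bar>y\<bar> * B"
    using mult_left_mono[OF vx_bounded[OF r] abs_ge_zero[of y]] by (simp add: abs_mult)
  then have "\<bar>- y * vx (lam * y) r + vt (lam * y) r\<bar> \<le> \<bar>y\<bar> * B + B"
    using vt_bounded[OF r, of "lam * y"] unfolding mult_minus_left by linarith
  then have "\<bar>h * (- y * vx (lam * y) r + vt (lam * y) r)\<bar> \<le> h * (\<bar>y\<bar> * B + B)"
    using h by (simp add: abs_mult mult_left_mono)
  moreover have "\<bar>v ((lam - h) * y) (r + h) - v ((lam - h) * y) r\<bar> \<le> B * h"
    using v_lipschitz_t[OF r rh, of "(lam - h) * y"] h by simp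
  moreover have "\<bar>v ((lam - h) * y) r - v (lam * y) r\<bar> \<le> B * (h * \<bar>y\<bar>)"
    using v_lipschitz_x[OF r, of "(lam - h) * y" "lam * y"] h by (simp add: algebra_simps abs_mult)
  ultimately show ?thesis by (simp add: algebra_simps)
qed

text \<open>The Hoelder bound is used where \<open>|y| \<le> N\<close>, the crude one on the tail.\<close>
lemma path_increment_remainder_le:
  assumes r: "0 \<le> r" and h: "0 < h" and N: "1 \<le> N"
  shows "\<bar>v ((lam - h) * y) (r + h) - v (lam * y) r - h * (- y * vx (lam * y) r + vt (lam * y) r)\<bar>
         \<le> 3 * C * N\<^sup>2 * h powr (1 + \<alpha>) + 4 * B * h * (\<bar>y\<bar> * indicator {y. \<bar>y\<bar> > N} y)"
proof (cases "\<bar>y\<bar> > N")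
  case True
  then have "2 * B * h * (1 + \<bar>y\<bar>) \<le> 2 * B * h * (2 * \<bar>y\<bar>)"
    using N B_nonneg h by (intro mult_left_mono) auto
  moreover have "0 \<le> 3 * C * N\<^sup>2 * h powr (1 + \<alpha>)" using C_nonneg by simp
  moreover have "4 * B * h * (\<bar>y\<bar> * indicator {y. \<bar>y\<bar> > N} y) = 2 * B * h * (2 * \<bar>y\<bar>)"
    using True by simp
  ultimately show ?thesis
    using path_increment_remainder_crude[OF r h, of lam y] by linarith
next
  case False
  have "\<bar>y\<bar> powr \<alpha> \<le> N powr \<alpha>" using False alpha by (intro powr_mono2) auto
  also have "\<dots> \<le> N powr 1" using N alpha by (intro powr_mono) auto
  finally have "\<bar>y\<bar> powr \<alpha> \<le> N" using N by simp
  then have "1 + \<bar>y\<bar> powr \<alpha> + \<bar>y\<bar> powr (1 + \<alpha>) \<le> 1 + N + N * N"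
    using False by (simp add: powr_mult_base[OF abs_ge_zero, symmetric] add_mono mult_mono)
  also have "\<dots> \<le> 3 * N\<^sup>2"
    using N mult_right_mono[of 1 N N] unfolding power2_eq_square by linarith
  finally have "C * h powr (1 + \<alpha>) * (1 + \<bar>y\<bar> powr \<alpha> + \<bar>y\<bar> powr (1 + \<alpha>)) \<le> C * h powr (1 + \<alpha>) * (3 * N\<^sup>2)"
    using C_nonneg by (intro mult_left_mono) auto
  with path_increment_remainder_holder[OF r h, of lam y] False show ?thesis
    by (simp add: algebra_simps)
qed

lemma psi_mu_increment_remainder_le:
  assumes \<mu>: "\<mu> \<in> \<Theta>" and r: "0 \<le> r" and h: "0 < h" and N: "1 \<le> N"
  shows "\<bar>psi_mu \<mu> tb (r + h) - psi_mu \<mu> tb r - h * integral\<^sup>L \<mu> (path_deriv tb r)\<bar>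
           \<le> 3 * C * N\<^sup>2 * h powr (1 + \<alpha>) + 4 * B * h * integral\<^sup>L \<mu> (\<lambda>y. \<bar>y\<bar> * indicator {y. \<bar>y\<bar> > N} y)"
proof -
  have rh: "0 \<le> r + h" using r h by simp
  have "\<bar>integral\<^sup>L \<mu> (\<lambda>y. v ((tb - (r + h)) * y) (r + h) - v ((tb - r) * y) r) - integral\<^sup>L \<mu> (\<lambda>y. h * path_deriv tb r y)\<bar>
      \<le> 1 * integral\<^sup>L \<mu> (\<lambda>y. 3 * C * N\<^sup>2 * h powr (1 + \<alpha>) + 4 * B * h * (\<bar>y\<bar> * indicator {y. \<bar>y\<bar> > N} y))"
  proof (rule abs_integral_diff_le_mult)
    show "integrable \<mu> (\<lambda>y. v ((tb - (r + h)) * y) (r + h) - v ((tb - r) * y) r)"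
      using integrable_v_scaled[OF \<mu> rh] integrable_v_scaled[OF \<mu> r] by auto
    show "integrable \<mu> (\<lambda>y. h * path_deriv tb r y)" using integrable_path_deriv[OF \<mu> r] by auto
    show "integrable \<mu> (\<lambda>y. 3 * C * N\<^sup>2 * h powr (1 + \<alpha>) + 4 * B * h * (\<bar>y\<bar> * indicator {y. \<bar>y\<bar> > N} y))"
      using integrable_tail_Theta[OF \<mu>] integrable_const_Theta[OF \<mu>] by auto
    show "\<bar>v ((tb - (r + h)) * y) (r + h) - v ((tb - r) * y) r - h * path_deriv tb r y\<bar>
        \<le> 1 * (3 * C * N\<^sup>2 * h powr (1 + \<alpha>) + 4 * B * h * (\<bar>y\<bar> * indicator {y. \<bar>y\<bar> > N} y))" for y
      using path_increment_remainder_le[OF r h N, of "tb - r" y] by (simp add: path_deriv_def diff_diff_eq)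
  qed
  then show ?thesis
    using integrable_v_scaled[OF \<mu> rh] integrable_v_scaled[OF \<mu> r] integrable_tail_Theta[OF \<mu>]
      integrable_const_Theta[OF \<mu>] measure_space_Theta[OF \<mu>]
    by (simp add: psi_mu_def)
qed

lemma psi_mu_increment_remainder_uniform:
  assumes e: "e > 0"
  shows "\<exists>\<eta>>0. \<forall>h r \<mu>. 0 < h \<longrightarrow> h < \<eta> \<longrightarrow> 0 \<le> r \<longrightarrow> \<mu> \<in> \<Theta> \<longrightarrow>
           \<bar>psi_mu \<mu> tb (r + h) - psi_mu \<mu> tb r - h * integral\<^sup>L \<mu> (path_deriv tb r)\<bar> \<le> h * e"
proof -
  define e' where "e' = e / (8 * (B + 1))"
  have e': "e' > 0" using e B_nonneg by (simp add: e'_def)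
  obtain N where N: "1 \<le> N" "\<And>\<mu>. \<mu> \<in> \<Theta> \<Longrightarrow> integral\<^sup>L \<mu> (\<lambda>y. \<bar>y\<bar> * indicator {y. \<bar>y\<bar> > N} y) \<le> e'"
    using uniform_tail_integral_small[OF e'] by auto
  define Q where "Q = 6 * C * N\<^sup>2 + 1"
  have "0 \<le> C * N\<^sup>2" using C_nonneg by simp
  then have Q: "Q > 0" "6 * C * N\<^sup>2 \<le> Q" by (auto simp: Q_def)
  define \<eta> where "\<eta> = (e / Q) powr (1 / \<alpha>)"
  have \<eta>: "\<eta> > 0" "\<eta> powr \<alpha> = e / Q" using e Q alpha by (simp_all add: \<eta>_def powr_powr)
  show ?thesis
  proof (intro exI[of _ \<eta>] conjI allI impI \<eta>(1))
    fix h r :: real and \<mu> assume h: "0 < h" "h < \<eta>" and r: "0 \<le> r" and \<mu>: "\<mu> \<in> \<Theta>"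
    have "h powr \<alpha> \<le> e / Q" using h alpha \<eta>(2) by (metis less_imp_le powr_mono2)
    then have "3 * C * N\<^sup>2 * h powr \<alpha> \<le> 3 * C * N\<^sup>2 * (e / Q)" using C_nonneg by (intro mult_left_mono) auto
    also have "\<dots> \<le> e / 2" using Q e by (simp add: field_simps)
    finally have "h * (3 * C * N\<^sup>2 * h powr \<alpha>) \<le> h * (e / 2)" using h by (intro mult_left_mono) auto
    then have "3 * C * N\<^sup>2 * h powr (1 + \<alpha>) \<le> h * (e / 2)"
      using h by (simp add: powr_add mult.left_commute)
    moreover have "4 * B * h * integral\<^sup>L \<mu> (\<lambda>y. \<bar>y\<bar> * indicator {y. \<bar>y\<bar> > N} y) \<le> 4 * B * h * e'"
      using N(2)[OF \<mu>] B_nonneg h by (intro mult_left_mono) auto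
    moreover have "4 * B * h * e' \<le> h * (e / 2)" using B_nonneg h e by (simp add: e'_def field_simps)
    ultimately show "\<bar>psi_mu \<mu> tb (r + h) - psi_mu \<mu> tb r - h * integral\<^sup>L \<mu> (path_deriv tb r)\<bar> \<le> h * e"
      using psi_mu_increment_remainder_le[OF \<mu> r h(1) N(1), of tb] by linarith
  qed
qed

lemma abs_vx_scaled_diff_le_K:
  assumes "0 \<le> r" "0 \<le> lam"
  shows "\<bar>vx (lam * y) r - vx 0 r\<bar> \<le> K r * lam powr \<alpha> * \<bar>y\<bar> powr \<alpha>"
  using abs_vx_diff_le_K[OF assms(1), of "lam * y" 0] assms(2) by (simp add: abs_mult powr_mult mult.assoc)

lemma integral_v_scaled_expansion:
  assumes \<mu>: "\<mu> \<in> \<Theta>" and r: "0 \<le> r" and lam: "0 \<le> lam"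
    and moment: "moment_bound (1 + \<alpha>) M \<or> K r = 0"
  shows "\<bar>integral\<^sup>L \<mu> (\<lambda>y. v (lam * y) r) - (v 0 r + lam * vx 0 r * mean \<mu>)\<bar> \<le> K r * lam powr (1 + \<alpha>) * M"
proof -
  have "\<bar>integral\<^sup>L \<mu> (\<lambda>y. v (lam * y) r) - integral\<^sup>L \<mu> (\<lambda>y. v 0 r + lam * vx 0 r * y)\<bar> \<le> K r * lam powr (1 + \<alpha>) * M"
  proof (rule abs_integral_diff_le_mult_bound[where w = "\<lambda>y. \<bar>y\<bar> powr (1 + \<alpha>)"])
    show "integrable \<mu> (\<lambda>y. v (lam * y) r)" by (rule integrable_v_scaled[OF \<mu> r])
    show "integrable \<mu> (\<lambda>y. v 0 r + lam * vx 0 r * y)"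
      using integrable_const_Theta[OF \<mu>] integrable_id_Theta[OF \<mu>] by auto
    show "\<bar>v (lam * y) r - (v 0 r + lam * vx 0 r * y)\<bar> \<le> K r * lam powr (1 + \<alpha>) * \<bar>y\<bar> powr (1 + \<alpha>)" for y
      using v_taylor_x[OF r, of "lam * y" 0] lam by (simp add: abs_mult powr_mult algebra_simps)
    show "0 \<le> K r * lam powr (1 + \<alpha>)" using K_nonneg[OF r] by simp
    show "K r * lam powr (1 + \<alpha>) = 0 \<or>
        integrable \<mu> (\<lambda>y. \<bar>y\<bar> powr (1 + \<alpha>)) \<and> integral\<^sup>L \<mu> (\<lambda>y. \<bar>y\<bar> powr (1 + \<alpha>)) \<le> M"
      using moment \<mu> by (auto simp: moment_bound_def)
  qed
  moreover have "integral\<^sup>L \<mu> (\<lambda>y. v 0 r + lam * vx 0 r * y) = v 0 r + lam * vx 0 r * mean \<mu>"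
    using integrable_const_Theta[OF \<mu>] integrable_id_Theta[OF \<mu>] measure_space_Theta[OF \<mu>]
    by (simp add: mean_def)
  ultimately show ?thesis by simp
qed

lemma integral_mult_vx_scaled_expansion:
  assumes \<mu>: "\<mu> \<in> \<Theta>" and r: "0 \<le> r" and lam: "0 \<le> lam"
    and moment: "moment_bound (1 + \<alpha>) M \<or> K r = 0"
  shows "\<bar>integral\<^sup>L \<mu> (\<lambda>y. y * vx (lam * y) r) - vx 0 r * mean \<mu>\<bar> \<le> K r * lam powr \<alpha> * M"
proof -
  have "\<bar>integral\<^sup>L \<mu> (\<lambda>y. y * vx (lam * y) r) - integral\<^sup>L \<mu> (\<lambda>y. vx 0 r * y)\<bar> \<le> K r * lam powr \<alpha> * M"
  proof (rule abs_integral_diff_le_mult_bound[where w = "\<lambda>y. \<bar>y\<bar> powr (1 + \<alpha>)"])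
    show "integrable \<mu> (\<lambda>y. y * vx (lam * y) r)" by (rule integrable_mult_vx_scaled[OF \<mu> r])
    show "integrable \<mu> (\<lambda>y. vx 0 r * y)" using integrable_id_Theta[OF \<mu>] by auto
    fix y
    have "\<bar>y * vx (lam * y) r - vx 0 r * y\<bar> = \<bar>y\<bar> * \<bar>vx (lam * y) r - vx 0 r\<bar>"
      by (simp add: abs_mult[symmetric] algebra_simps)
    also have "\<dots> \<le> \<bar>y\<bar> * (K r * lam powr \<alpha> * \<bar>y\<bar> powr \<alpha>)"
      using abs_vx_scaled_diff_le_K[OF r lam] by (intro mult_left_mono) auto
    also have "\<dots> = K r * lam powr \<alpha> * \<bar>y\<bar> powr (1 + \<alpha>)" by (simp add: powr_mult_base[OF abs_ge_zero])
    finally show "\<bar>y * vx (lam * y) r - vx 0 r * y\<bar> \<le> K r * lam powr \<alpha> * \<bar>y\<bar> powr (1 + \<alpha>)" .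
  next
    show "0 \<le> K r * lam powr \<alpha>" using K_nonneg[OF r] by simp
    show "K r * lam powr \<alpha> = 0 \<or>
        integrable \<mu> (\<lambda>y. \<bar>y\<bar> powr (1 + \<alpha>)) \<and> integral\<^sup>L \<mu> (\<lambda>y. \<bar>y\<bar> powr (1 + \<alpha>)) \<le> M"
      using moment \<mu> by (auto simp: moment_bound_def)
  qed
  then show ?thesis by (simp add: mean_def)
qed

lemma integral_p_vx_scaled_expansion:
  assumes \<mu>: "\<mu> \<in> \<Theta>" and r: "0 \<le> r" and lam: "0 \<le> lam"
    and moment: "moment_bound (1 + \<alpha>) M \<or> K r = 0"
  shows "\<bar>integral\<^sup>L \<mu> (\<lambda>y. p (vx (lam * y) r)) - p (vx 0 r)\<bar> \<le> K r * lam powr \<alpha> * M"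
proof -
  have "\<bar>integral\<^sup>L \<mu> (\<lambda>y. p (vx (lam * y) r)) - integral\<^sup>L \<mu> (\<lambda>y. p (vx 0 r))\<bar> \<le> K r * lam powr \<alpha> * M"
  proof (rule abs_integral_diff_le_mult_bound[where w = "\<lambda>y. m1 * \<bar>y\<bar> powr \<alpha>"])
    show "integrable \<mu> (\<lambda>y. p (vx (lam * y) r))" by (rule integrable_p_vx_scaled[OF \<mu> r])
    show "integrable \<mu> (\<lambda>y. p (vx 0 r))" by (rule integrable_const_Theta[OF \<mu>])
    fix y
    have "\<bar>p (vx (lam * y) r) - p (vx 0 r)\<bar> \<le> m1 * \<bar>vx (lam * y) r - vx 0 r\<bar>" by (rule abs_p_diff_le)
    also have "\<dots> \<le> m1 * (K r * lam powr \<alpha> * \<bar>y\<bar> powr \<alpha>)"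
      using abs_vx_scaled_diff_le_K[OF r lam] m1_nonneg by (rule mult_left_mono)
    finally show "\<bar>p (vx (lam * y) r) - p (vx 0 r)\<bar> \<le> K r * lam powr \<alpha> * (m1 * \<bar>y\<bar> powr \<alpha>)"
      by (simp add: algebra_simps)
  next
    show "0 \<le> K r * lam powr \<alpha>" using K_nonneg[OF r] by simp
    show "K r * lam powr \<alpha> = 0 \<or>
        integrable \<mu> (\<lambda>y. m1 * \<bar>y\<bar> powr \<alpha>) \<and> integral\<^sup>L \<mu> (\<lambda>y. m1 * \<bar>y\<bar> powr \<alpha>) \<le> M"
      using moment m1_mult_integral_abs_powr_le[OF alpha _ \<mu>] integrable_abs_powr[OF \<mu>, of \<alpha>] alpha
      by auto
  qed
  then show ?thesis using measure_space_Theta[OF \<mu>] by simp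
qed

text \<open>Since \<open>f = vt - p(vx)\<close>, the expansions above turn \<open>\<integral> path_deriv\<close> into \<open>\<integral> f\<close> plus
  \<open>p(vx 0 r) - vx 0 r \<cdot> mean \<mu>\<close>, up to twice the Hoelder error.\<close>
lemma integral_path_deriv_bounds:
  assumes \<mu>: "\<mu> \<in> \<Theta>" and r: "0 \<le> r" and lam: "0 \<le> tb - r"
    and moment: "moment_bound (1 + \<alpha>) M \<or> K r = 0"
  shows "integral\<^sup>L \<mu> (path_deriv tb r)
           \<le> integral\<^sup>L \<mu> (\<lambda>y. f ((tb - r) * y) r) + (p (vx 0 r) - vx 0 r * mean \<mu>) + 2 * K r * (tb - r) powr \<alpha> * M"
    and "- integral\<^sup>L \<mu> (path_deriv tb r)
           \<le> integral\<^sup>L \<mu> (\<lambda>y. - f ((tb - r) * y) r) + (vx 0 r * mean \<mu> - p (vx 0 r)) + 2 * K r * (tb - r) powr \<alpha> * M"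
proof -
  have "path_deriv tb r = (\<lambda>y. (f ((tb - r) * y) r + p (vx ((tb - r) * y) r)) - y * vx ((tb - r) * y) r)"
    by (auto simp: path_deriv_def f_def fun_eq_iff)
  moreover have "integrable \<mu> (\<lambda>y. f ((tb - r) * y) r)"
    using integrable_scaled[OF bounded_holder_f alpha(1) \<mu> r] .
  ultimately have "integral\<^sup>L \<mu> (path_deriv tb r) = integral\<^sup>L \<mu> (\<lambda>y. f ((tb - r) * y) r)
      + integral\<^sup>L \<mu> (\<lambda>y. p (vx ((tb - r) * y) r)) - integral\<^sup>L \<mu> (\<lambda>y. y * vx ((tb - r) * y) r)"
    using integrable_p_vx_scaled[OF \<mu> r] integrable_mult_vx_scaled[OF \<mu> r] by simp
  moreover note integral_mult_vx_scaled_expansion[OF \<mu> r lam moment]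
    and integral_p_vx_scaled_expansion[OF \<mu> r lam moment]
  moreover have "integral\<^sup>L \<mu> (\<lambda>y. - f ((tb - r) * y) r) = - integral\<^sup>L \<mu> (\<lambda>y. f ((tb - r) * y) r)" by simp
  ultimately show "integral\<^sup>L \<mu> (path_deriv tb r)
           \<le> integral\<^sup>L \<mu> (\<lambda>y. f ((tb - r) * y) r) + (p (vx 0 r) - vx 0 r * mean \<mu>) + 2 * K r * (tb - r) powr \<alpha> * M"
    and "- integral\<^sup>L \<mu> (path_deriv tb r)
           \<le> integral\<^sup>L \<mu> (\<lambda>y. - f ((tb - r) * y) r) + (vx 0 r * mean \<mu> - p (vx 0 r)) + 2 * K r * (tb - r) powr \<alpha> * M"
    unfolding abs_le_iff by linarith+
qed

section \<open>Dini derivatives of \<open>psi\<close> and the main estimate\<close>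

lemma psi_decrement_right_bound:
  assumes r: "0 < r" "r < tb" and moment: "moment_bound (1 + \<alpha>) M \<or> K r = 0" and e: "e > 0"
  shows "\<exists>\<eta>>0. \<forall>h. 0 < h \<longrightarrow> h < \<eta> \<longrightarrow>
           psi tb r - psi tb (r + h) \<le> h * (Ef_neg tb r + 2 * K r * (tb - r) powr \<alpha> * M + e)"
proof -
  obtain \<eta> where "\<eta> > 0" and \<eta>: "\<forall>h r \<mu>. 0 < h \<longrightarrow> h < \<eta> \<longrightarrow> 0 \<le> r \<longrightarrow> \<mu> \<in> \<Theta> \<longrightarrow>
      \<bar>psi_mu \<mu> tb (r + h) - psi_mu \<mu> tb r - h * integral\<^sup>L \<mu> (path_deriv tb r)\<bar> \<le> h * (e / 2)"
    using psi_mu_increment_remainder_uniform[of "e / 2" tb] e by auto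
  have "psi tb r - psi tb (r + h) \<le> h * (Ef_neg tb r + 2 * K r * (tb - r) powr \<alpha> * M + e)"
    if h: "0 < h" "h < \<eta>" for h
  proof -
    have r0: "0 \<le> r" and rh: "0 \<le> r + h" and lam: "0 \<le> tb - r" using r h by auto
    obtain \<mu> where \<mu>: "\<mu> \<in> \<Theta>" and near: "psi tb r - h * (e / 2) < psi_mu \<mu> tb r"
      using psi_approx[OF r0, of "h * (e / 2)" tb] h e by auto
    have "- integral\<^sup>L \<mu> (path_deriv tb r) \<le> Ef_neg tb r + 2 * K r * (tb - r) powr \<alpha> * M"
      using integral_path_deriv_bounds(2)[OF \<mu> r0 lam moment] integral_neg_f_le_Ef_neg[OF \<mu> r0, of tb]
        mult_mean_le_p[OF \<mu>, of "vx 0 r"]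
      by (simp add: mult.commute)
    then have "h * (- integral\<^sup>L \<mu> (path_deriv tb r)) \<le> h * (Ef_neg tb r + 2 * K r * (tb - r) powr \<alpha> * M)"
      using h by (intro mult_left_mono) auto
    moreover have "\<bar>psi_mu \<mu> tb (r + h) - psi_mu \<mu> tb r - h * integral\<^sup>L \<mu> (path_deriv tb r)\<bar> \<le> h * (e / 2)"
      using \<eta> h r0 \<mu> by blast
    moreover have "h * (Ef_neg tb r + 2 * K r * (tb - r) powr \<alpha> * M + e)
        = h * (Ef_neg tb r + 2 * K r * (tb - r) powr \<alpha> * M) + 2 * (h * (e / 2))"
      by (simp add: algebra_simps)
    ultimately show ?thesis
      using near psi_mu_le_psi[OF \<mu> rh, of tb] unfolding abs_le_iff mult_minus_right by linarith
  qed
  with \<open>\<eta> > 0\<close> show ?thesis by blast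
qed

text \<open>A near-maximiser of \<open>psi\<close> at time \<open>r + h\<close> is, by Lipschitz continuity in time, a
  near-maximiser at time \<open>r\<close> too; by the first-order expansion of \<open>v(\<cdot>, r)\<close> its mean then
  nearly attains the supremum \<open>p (vx 0 r)\<close>.\<close>
lemma p_vx_le_near_maximiser:
  assumes \<mu>: "\<mu> \<in> \<Theta>" and r: "0 \<le> r" "r < tb" and h: "0 < h"
    and moment: "moment_bound (1 + \<alpha>) M \<or> K r = 0"
    and near: "psi tb (r + h) - \<epsilon> < psi_mu \<mu> tb (r + h)"
  shows "p (vx 0 r) \<le> vx 0 r * mean \<mu> + 2 * K r * (tb - r) powr \<alpha> * M + (2 * B * (1 + m1) * h + \<epsilon>) / (tb - r)"
proof (rule p_le)
  define lam where "lam = tb - r"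
  have lam: "0 < lam" using r by (simp add: lam_def)
  have rh: "0 \<le> r + h" using r h by simp
  have expansion: "\<bar>psi_mu \<kappa> tb r - (v 0 r + lam * vx 0 r * mean \<kappa>)\<bar> \<le> K r * lam powr (1 + \<alpha>) * M"
    if "\<kappa> \<in> \<Theta>" for \<kappa>
    using integral_v_scaled_expansion[OF that r(1) _ moment, of lam] lam by (simp add: psi_mu_def lam_def)
  fix \<nu> assume \<nu>: "\<nu> \<in> \<Theta>"
  have "psi_mu \<nu> tb (r + h) \<le> psi tb (r + h)" by (rule psi_mu_le_psi[OF \<nu> rh])
  moreover have "\<bar>psi_mu \<nu> tb r - psi_mu \<nu> tb (r + h)\<bar> \<le> B * (1 + m1) * h"
    using abs_psi_mu_diff_le[OF \<nu> r(1) rh, of tb] h by simp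
  moreover have "\<bar>psi_mu \<mu> tb (r + h) - psi_mu \<mu> tb r\<bar> \<le> B * (1 + m1) * h"
    using abs_psi_mu_diff_le[OF \<mu> rh r(1), of tb] h by simp
  ultimately have "lam * (vx 0 r * mean \<nu>) \<le> lam * (vx 0 r * mean \<mu>) + 2 * K r * lam powr (1 + \<alpha>) * M
      + 2 * B * (1 + m1) * h + \<epsilon>"
    using expansion[OF \<mu>] expansion[OF \<nu>] near unfolding abs_le_iff by (simp add: algebra_simps)
  also have "\<dots> = lam * (vx 0 r * mean \<mu> + 2 * K r * lam powr \<alpha> * M + (2 * B * (1 + m1) * h + \<epsilon>) / lam)"
    using lam by (simp add: field_simps powr_add)
  finally show "vx 0 r * mean \<nu> \<le> vx 0 r * mean \<mu> + 2 * K r * (tb - r) powr \<alpha> * M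
      + (2 * B * (1 + m1) * h + \<epsilon>) / (tb - r)"
    using lam unfolding lam_def by simp
qed

lemma psi_increment_right_bound:
  assumes r: "0 < r" "r < tb" and moment: "moment_bound (1 + \<alpha>) M \<or> K r = 0" and e: "e > 0"
  shows "\<exists>\<eta>>0. \<forall>h. 0 < h \<longrightarrow> h < \<eta> \<longrightarrow>
           psi tb (r + h) - psi tb r \<le> h * (Ef tb r + 4 * K r * (tb - r) powr \<alpha> * M + e)"
proof -
  define L where "L = B * (1 + m1)"
  have L: "0 \<le> L" using B_nonneg m1_nonneg by (simp add: L_def)
  obtain \<eta>1 where "\<eta>1 > 0" and \<eta>1: "\<forall>h r \<mu>. 0 < h \<longrightarrow> h < \<eta>1 \<longrightarrow> 0 \<le> r \<longrightarrow> \<mu> \<in> \<Theta> \<longrightarrow>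
      \<bar>psi_mu \<mu> tb (r + h) - psi_mu \<mu> tb r - h * integral\<^sup>L \<mu> (path_deriv tb r)\<bar> \<le> h * (e / 3)"
    using psi_mu_increment_remainder_uniform[of "e / 3" tb] e by auto
  define \<eta> where "\<eta> = min \<eta>1 (e * (tb - r) / (6 * L + e))"
  have "\<eta> > 0" using \<open>\<eta>1 > 0\<close> e r L by (simp add: \<eta>_def)
  have "psi tb (r + h) - psi tb r \<le> h * (Ef tb r + 4 * K r * (tb - r) powr \<alpha> * M + e)"
    if h: "0 < h" "h < \<eta>" for h
  proof -
    have r0: "0 \<le> r" and rh: "0 \<le> r + h" and lam: "0 < tb - r" using r h by auto
    obtain \<mu> where \<mu>: "\<mu> \<in> \<Theta>" and near: "psi tb (r + h) - h * (e / 3) < psi_mu \<mu> tb (r + h)"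
      using psi_approx[OF rh, of "h * (e / 3)" tb] h e by auto
    have "h < e * (tb - r) / (6 * L + e)" using h by (simp add: \<eta>_def)
    then have "h * (6 * L + e) \<le> e * (tb - r)" using L e by (simp add: pos_less_divide_eq)
    then have "(2 * B * (1 + m1) * h + h * (e / 3)) / (tb - r) \<le> e / 3"
      using lam by (simp add: L_def field_simps)
    then have "p (vx 0 r) \<le> vx 0 r * mean \<mu> + 2 * K r * (tb - r) powr \<alpha> * M + e / 3"
      using p_vx_le_near_maximiser[OF \<mu> r0 r(2) h(1) moment near] by linarith
    then have "integral\<^sup>L \<mu> (path_deriv tb r) \<le> Ef tb r + 4 * K r * (tb - r) powr \<alpha> * M + e / 3"
      using integral_path_deriv_bounds(1)[OF \<mu> r0 less_imp_le[OF lam] moment] integral_f_le_Ef[OF \<mu> r0, of tb]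
      by linarith
    then have "h * integral\<^sup>L \<mu> (path_deriv tb r) \<le> h * (Ef tb r + 4 * K r * (tb - r) powr \<alpha> * M + e / 3)"
      using h by (intro mult_left_mono) auto
    moreover have "\<bar>psi_mu \<mu> tb (r + h) - psi_mu \<mu> tb r - h * integral\<^sup>L \<mu> (path_deriv tb r)\<bar> \<le> h * (e / 3)"
      using \<eta>1 h r0 \<mu> by (simp add: \<eta>_def)
    moreover have "h * (Ef tb r + 4 * K r * (tb - r) powr \<alpha> * M + e)
        = h * (Ef tb r + 4 * K r * (tb - r) powr \<alpha> * M + e / 3) + 2 * (h * (e / 3))"
      by (simp add: algebra_simps)
    ultimately show ?thesis
      using near psi_mu_le_psi[OF \<mu> r0, of tb] unfolding abs_le_iff by linarith
  qed
  with \<open>\<eta> > 0\<close> show ?thesis by blast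
qed

lemma increment_le_integral_plus_K:
  fixes \<Phi> F :: "real \<Rightarrow> real"
  assumes t: "0 \<le> t" "t \<le> tb" and c: "0 \<le> c"
    and \<Phi>: "continuous_on {t..tb} \<Phi>" and F: "continuous_on {0..} F"
    and dini: "\<And>r e. t < r \<Longrightarrow> r < tb \<Longrightarrow> e > 0 \<Longrightarrow>
                 \<exists>\<eta>>0. \<forall>h. 0 < h \<longrightarrow> h < \<eta> \<longrightarrow> \<Phi> (r + h) - \<Phi> r \<le> h * (F r + c * K r + e)"
  shows "\<Phi> tb - \<Phi> t \<le> integral {t..tb} F + c * integral {t..tb} K"
proof -
  have sub: "{t..tb} \<subseteq> {0..}" using t by auto
  have int_F: "F integrable_on {t..tb}"
    by (rule integrable_continuous_interval[OF continuous_on_subset[OF F sub]])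
  have int_K: "(\<lambda>r. c * K r) integrable_on {t..tb}"
    using integrable_on_cmult_left[OF K_integrable_on[OF t(1)], of c] by simp
  have "\<Phi> tb - \<Phi> t \<le> integral {t..tb} (\<lambda>r. F r + c * K r)"
  proof (rule increment_le_integral_of_right_dini_bound[OF t(2) \<Phi>])
    show "(\<lambda>r. F r + c * K r) integrable_on {t..tb}" using int_F int_K by (rule integrable_add)
    show "lower_semicontinuous_on {t..tb} (\<lambda>r. F r + c * K r)"
      using lower_semicontinuous_on_subset[OF _ sub] continuous_on_imp_lower_semicontinuous_on[OF F]
        lower_semicontinuous_on_cmult[OF lower_semicontinuous_on_K c]
      by (blast intro: lower_semicontinuous_on_add)
  qed (fact dini)
  also have "\<dots> = integral {t..tb} F + c * integral {t..tb} K"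
    using int_F int_K by (simp add: integral_add)
  finally show ?thesis .
qed

lemma K_time_to_go_le:
  assumes "0 \<le> t" "t < r" "r < tb" "0 \<le> M" "0 \<le> a" "a \<le> 4"
  shows "a * K r * (tb - r) powr \<alpha> * M \<le> 4 * (tb - t) powr \<alpha> * M * K r"
proof -
  have "(tb - r) powr \<alpha> \<le> (tb - t) powr \<alpha>" using assms alpha by (intro powr_mono2) auto
  then have "K r * (tb - r) powr \<alpha> * M \<le> K r * (tb - t) powr \<alpha> * M"
    using K_nonneg[of r] assms by (intro mult_right_mono mult_left_mono) auto
  moreover have "0 \<le> K r * (tb - t) powr \<alpha> * M" using K_nonneg[of r] assms by simp
  ultimately have "a * (K r * (tb - r) powr \<alpha> * M) \<le> a * (K r * (tb - t) powr \<alpha> * M)"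
    and "a * (K r * (tb - t) powr \<alpha> * M) \<le> 4 * (K r * (tb - t) powr \<alpha> * M)"
    using assms(5,6) by (auto intro: mult_left_mono mult_right_mono)
  then have "a * (K r * (tb - r) powr \<alpha> * M) \<le> 4 * (K r * (tb - t) powr \<alpha> * M)" by linarith
  then show ?thesis by (simp add: algebra_simps)
qed

lemma psi_decrease_le:
  assumes t: "0 \<le> t" "t \<le> tb" and M: "0 \<le> M"
    and moment: "\<And>r. t < r \<Longrightarrow> r < tb \<Longrightarrow> moment_bound (1 + \<alpha>) M \<or> K r = 0"
  shows "psi tb t - psi tb tb \<le> integral {t..tb} (Ef_neg tb) + 4 * (tb - t) powr \<alpha> * M * integral {t..tb} K"
proof -
  have "(\<lambda>r. - psi tb r) tb - (\<lambda>r. - psi tb r) t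
      \<le> integral {t..tb} (Ef_neg tb) + (4 * (tb - t) powr \<alpha> * M) * integral {t..tb} K"
  proof (rule increment_le_integral_plus_K[OF t _ _ continuous_on_Ef_neg])
    show "0 \<le> 4 * (tb - t) powr \<alpha> * M" using M by simp
    show "continuous_on {t..tb} (\<lambda>r. - psi tb r)"
      using t by (intro continuous_intros continuous_on_subset[OF continuous_on_psi]) auto
    fix r e :: real assume r: "t < r" "r < tb" and e: "e > 0"
    then obtain \<eta> where "\<eta> > 0" and \<eta>: "\<forall>h. 0 < h \<longrightarrow> h < \<eta> \<longrightarrow>
        psi tb r - psi tb (r + h) \<le> h * (Ef_neg tb r + 2 * K r * (tb - r) powr \<alpha> * M + e)"
      using psi_decrement_right_bound[of r tb M e] moment t by auto
    have "2 * K r * (tb - r) powr \<alpha> * M \<le> 4 * (tb - t) powr \<alpha> * M * K r"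
      using K_time_to_go_le[OF t(1) r M] by simp
    then have mono: "h * (Ef_neg tb r + 2 * K r * (tb - r) powr \<alpha> * M + e) \<le> h * (Ef_neg tb r + 4 * (tb - t) powr \<alpha> * M * K r + e)"
      if "0 < h" for h using that by (intro mult_left_mono) auto
    show "\<exists>\<eta>>0. \<forall>h. 0 < h \<longrightarrow> h < \<eta> \<longrightarrow>
        - psi tb (r + h) - - psi tb r \<le> h * (Ef_neg tb r + 4 * (tb - t) powr \<alpha> * M * K r + e)"
    proof (intro exI[of _ \<eta>] conjI allI impI \<open>\<eta> > 0\<close>)
      fix h assume "0 < h" "h < \<eta>"
      with \<eta> have "psi tb r - psi tb (r + h) \<le> h * (Ef_neg tb r + 2 * K r * (tb - r) powr \<alpha> * M + e)" by blast
      with mono[OF \<open>0 < h\<close>] show "- psi tb (r + h) - - psi tb r \<le> h * (Ef_neg tb r + 4 * (tb - t) powr \<alpha> * M * K r + e)"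
        by simp
    qed
  qed
  then show ?thesis by simp
qed

lemma psi_increase_le:
  assumes t: "0 \<le> t" "t \<le> tb" and M: "0 \<le> M"
    and moment: "\<And>r. t < r \<Longrightarrow> r < tb \<Longrightarrow> moment_bound (1 + \<alpha>) M \<or> K r = 0"
  shows "psi tb tb - psi tb t \<le> integral {t..tb} (Ef tb) + 4 * (tb - t) powr \<alpha> * M * integral {t..tb} K"
proof (rule increment_le_integral_plus_K[OF t _ _ continuous_on_Ef])
  show "0 \<le> 4 * (tb - t) powr \<alpha> * M" using M by simp
  show "continuous_on {t..tb} (psi tb)"
    using t by (intro continuous_on_subset[OF continuous_on_psi]) auto
  fix r e :: real assume r: "t < r" "r < tb" and e: "e > 0"
  then obtain \<eta> where "\<eta> > 0" and \<eta>: "\<forall>h. 0 < h \<longrightarrow> h < \<eta> \<longrightarrow>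
      psi tb (r + h) - psi tb r \<le> h * (Ef tb r + 4 * K r * (tb - r) powr \<alpha> * M + e)"
    using psi_increment_right_bound[of r tb M e] moment t by auto
  have "4 * K r * (tb - r) powr \<alpha> * M \<le> 4 * (tb - t) powr \<alpha> * M * K r"
    using K_time_to_go_le[OF t(1) r M] by simp
  then have "h * (Ef tb r + 4 * K r * (tb - r) powr \<alpha> * M + e) \<le> h * (Ef tb r + 4 * (tb - t) powr \<alpha> * M * K r + e)"
    if "0 < h" for h using that by (intro mult_left_mono) auto
  with \<eta> \<open>\<eta> > 0\<close> show "\<exists>\<eta>>0. \<forall>h. 0 < h \<longrightarrow> h < \<eta> \<longrightarrow>
      psi tb (r + h) - psi tb r \<le> h * (Ef tb r + 4 * (tb - t) powr \<alpha> * M * K r + e)"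
    by (meson order_trans)
qed

lemma psi_increment_bounds:
  assumes t: "0 \<le> t" "t \<le> tb"
  defines "c \<equiv> 4 * (tb - t) powr \<alpha> * integral {t..tb} K"
    and "E \<equiv> enn2ereal (sublin_E_nn \<Theta> (\<lambda>y. \<bar>y\<bar> powr (1 + \<alpha>)))"
  shows "ereal (psi tb tb - psi tb t) \<ge> - (ereal c * E) - ereal (integral {t..tb} (Ef_neg tb))
    \<and> ereal (psi tb tb - psi tb t) \<le> ereal c * E + ereal (integral {t..tb} (Ef tb))"
proof -
  have "0 \<le> integral {t..tb} K"
    by (rule Henstock_Kurzweil_Integration.integral_nonneg[OF K_integrable_on[OF t(1)]]) (use t K_nonneg in auto)
  then have c: "0 \<le> c" by (simp add: c_def)
  consider (finite) "E \<noteq> \<infinity>" | (c_pos) "E = \<infinity>" "0 < c" | (c_zero) "E = \<infinity>" "c = 0"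
    using c by fastforce
  then show ?thesis
  proof cases
    case finite
    define M where "M = enn2real (sublin_E_nn \<Theta> (\<lambda>y. \<bar>y\<bar> powr (1 + \<alpha>)))"
    have "0 \<le> M" by (simp add: M_def)
    have "sublin_E_nn \<Theta> (\<lambda>y. \<bar>y\<bar> powr (1 + \<alpha>)) = ennreal M"
      using finite by (simp add: E_def M_def top.not_eq_extremum)
    with \<open>0 \<le> M\<close> have "E = ereal M" by (simp add: E_def)
    moreover have "moment_bound (1 + \<alpha>) M"
      using moment_bound_sublin_E_nn finite by (simp add: E_def M_def)
    moreover note \<open>0 \<le> M\<close>
    ultimately show ?thesis
      using psi_decrease_le[OF t, of M] psi_increase_le[OF t, of M] by (simp add: c_def algebra_simps)
  next
    case c_pos
    then show ?thesis by simp
  next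
    case c_zero
    have "K r = 0" if "t < r" "r < tb" for r
      using K_eq_0_if_integral_eq_0[OF t(1) _ that] c_zero that by (simp add: c_def)
    then show ?thesis
      using psi_decrease_le[OF t order_refl] psi_increase_le[OF t order_refl] c_zero by simp
  qed
qed

end

lemma weakly_compact_probs_imp_sublinear_expectation:
  assumes "weakly_compact_probs \<Theta>" "cond_H \<Theta>"
  shows "sublinear_expectation \<Theta>"
proof (rule sublinear_expectation.intro)
  note W = assms(1)[unfolded weakly_compact_probs_def]
  show "\<Theta> \<noteq> {}" using W by (rule conjunct1)
  show "cond_H \<Theta>" by (rule assms(2))
  fix \<mu> assume "\<mu> \<in> \<Theta>"
  with conjunct1[OF conjunct2[OF W]] have "prob_space \<mu> \<and> sets \<mu> = sets borel" by (rule bspec)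
  then show "prob_space \<mu>" and "sets \<mu> = sets borel" by simp_all
qed

theorem proposition3p3:
  fixes \<alpha> :: real and \<Theta> :: "real measure set"
    and v vx vt f :: "real \<Rightarrow> real \<Rightarrow> real" and \<phi> :: "real \<Rightarrow> real"
    and t tb :: real
  assumes alpha: "0 < \<alpha>" "\<alpha> \<le> 1"
    and Theta: "weakly_compact_probs \<Theta>"
    and H: "cond_H \<Theta>"
    and reg: "C_b_1_alpha \<alpha> v vx vt"
    and pde: "\<And>x s. s > 0 \<Longrightarrow> vt x s - sublin_E \<Theta> (\<lambda>y. vx x s * y) = f x s"
    and init: "\<And>x. v x 0 = \<phi> x"
    and phi: "C_b_Lip \<phi>"
    and times: "0 \<le> t" "t \<le> tb" "tb \<le> 1"
  shows "ereal (v 0 tb - sublin_E \<Theta> (\<lambda>y. v ((tb - t) * y) t))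
           \<ge> - (ereal (4 * (tb - t) powr \<alpha> * integral {t..tb} (\<lambda>s. holder_seminorm \<alpha> (\<lambda>x. vx x s)))
                 * enn2ereal (sublin_E_nn \<Theta> (\<lambda>y. \<bar>y\<bar> powr (1 + \<alpha>))))
             - ereal (integral {t..tb} (\<lambda>s. sublin_E \<Theta> (\<lambda>y. - f ((tb - s) * y) s)))
       \<and> ereal (v 0 tb - sublin_E \<Theta> (\<lambda>y. v ((tb - t) * y) t))
           \<le> ereal (4 * (tb - t) powr \<alpha> * integral {t..tb} (\<lambda>s. holder_seminorm \<alpha> (\<lambda>x. vx x s)))
                 * enn2ereal (sublin_E_nn \<Theta> (\<lambda>y. \<bar>y\<bar> powr (1 + \<alpha>)))
             + ereal (integral {t..tb} (\<lambda>s. sublin_E \<Theta> (\<lambda>y. f ((tb - s) * y) s)))"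
proof -
  interpret sublinear_expectation \<Theta>
    using weakly_compact_probs_imp_sublinear_expectation[OF Theta H] .
  obtain B C where "C1_alpha_function \<Theta> \<alpha> v vx vt B C"
    using C_b_1_alpha_C1_alpha_function[OF sublinear_expectation_axioms alpha reg] .
  then interpret S: C1_alpha_function \<Theta> \<alpha> v vx vt B C .
  have f_eq: "f x s = S.f x s" if "0 < s" for x s
    using pde[OF that] by (simp add: S.f_def p_def)
  have Ef_neg: "S.Ef_neg tb s = sublin_E \<Theta> (\<lambda>y. - f ((tb - s) * y) s)"
    and Ef: "S.Ef tb s = sublin_E \<Theta> (\<lambda>y. f ((tb - s) * y) s)" if "s \<in> {t..tb} - {0}" for s
    using that times(1) f_eq[of s] by (simp_all add: S.Ef_neg_def S.Ef_def)
  have "integral {t..tb} (\<lambda>s. sublin_E \<Theta> (\<lambda>y. - f ((tb - s) * y) s)) = integral {t..tb} (S.Ef_neg tb)"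
    by (rule integral_spike[OF negligible_sing Ef_neg])
  moreover have "integral {t..tb} (\<lambda>s. sublin_E \<Theta> (\<lambda>y. f ((tb - s) * y) s)) = integral {t..tb} (S.Ef tb)"
    by (rule integral_spike[OF negligible_sing Ef])
  moreover have "(\<lambda>s. holder_seminorm \<alpha> (\<lambda>x. vx x s)) = S.K" by (simp add: fun_eq_iff S.K_def)
  moreover have "v 0 tb - sublin_E \<Theta> (\<lambda>y. v ((tb - t) * y) t) = S.psi tb tb - S.psi tb t"
    by (simp add: S.psi_at_end S.psi_def)
  ultimately show ?thesis
    using S.psi_increment_bounds[OF times(1,2)] by simp
qed

end
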